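(* Let $W=(V,B)$ be a non-degenerate formed space of Witt index $\omega\ge2$ as in the context, let $1\le k<\omega$, let $\Gamma$ be the polar Grassmann graph on singular $k$-subspaces, and let $X\ne Y$ be vertices of $\Gamma$. Put $m=k-\dim(X\cap Y)$. (1) If the pair $X,Y$ is not opposite, then $d(X,Y)=m$, and every geodesic from $X$ to $Y$ has the form $(X_0=X,X_1,\dots,X_m=Y)$ where, for some basis $w_1,\dots,w_{k-m}$ of $X\cap Y$ and vectors $x_1,\dots,x_m,y_1,\dots,y_m$ with $X=\langle x_1,\dots,x_m,w_1,\dots,w_{k-m}\rangle$ and $Y=\langle y_1,\dots,y_m,w_1,\dots,w_{k-m}\rangle$, one has $X_i=\langle x_1,\dots,x_{m-i},y_{m-i+1},\dots,y_m,w_1,\dots,w_{k-m}\rangle$ for $0\le i\le m$, and: (a) $B(x_i,y_j)=0$ for $1\le i\le j\le m$; (b) for each $2\le i\le m$, either $B(x_i,y_j)=0$ for all $1\le j<i$, or there is a unique $i'<i$ with $B(x_i,y_{i'})=1$ and $B(x_i,y_j)=0$ for all other $1\le j<i$; and if $i_1\ne i_2$ both have such indices $i_1',i_2'$, then $i_1'\ne i_2'$. (2) If the pair $X,Y$ is opposite, then $d(X,Y)=m+1$, and every geodesic from $X$ to $Y$ has the form $(X,X_0,X_1,\dots,X_m=Y)$ where, for some basis $w_1,\dots,w_{k-m}$ of $X\cap Y$ and vectors $x_0,x_1,\dots,x_m,y_1,\dots,y_m$ with $X=\langle x_1,\dots,x_m,w_1,\dots,w_{k-m}\rangle$ and $Y=\langle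 y_1,\dots,y_m,w_1,\dots,w_{k-m}\rangle$, one has $X_i=\langle x_0,x_1,\dots,x_{m-i-1},y_{m-i+1},\dots,y_m,w_1,\dots,w_{k-m}\rangle$ for $0\le i\le m$, and: $B(x_i,y_j)=0$ for $0\le i<j\le m$; $B(x_i,y_i)=1$ for $1\le i\le m$; $B(x_i,y_j)=0$ for $1\le j<i\le m$. In particular, $\Gamma$ has diameter $k+1$.
   Context: $V$ is a finite-dimensional vector space over $\mathbb{F}_q$ and $W=(V,B)$ is one of: a symplectic space of dimension $2\omega$; an orthogonal space of dimension $2\omega+1$, of plus type of dimension $2\omega$, or of minus type of dimension $2\omega+2$ (non-degenerate quadratic form, $B$ its associated bilinear form); a unitary space of dimension $2\omega+1$ or $2\omega$ ($q$ a square, $B$ Hermitian). For $U\le V$, $U^\perp=\{v: B(u,v)=0\ \forall u\in U\}$. A subspace is singular if it is totally isotropic (totally singular in the orthogonal case); maximal singular subspaces have dimension $\omega$. For $k<\omega$, the polar Grassmann graph has as vertices the singular $k$-subspaces, two distinct vertices $u,v$ adjacent iff $u+v$ is a singular $(k+1)$-subspace. Two distinct vertices $X,Y$ are called opposite if $X^\perp\cap Y=X\cap Y$, i.e. for every $y\in Y\setminus X$ there is $x\in X\setminus Y$ with $B(x,y)\ne0$. A geodesic from $X$ to $Y$ is a shortest path, written as its vertex sequence. *)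

theory Defs
  imports Complex_Main
begin

(* The ambient space V is the whole type 'v, a vector space over the finite
   field 'a with scalar multiplication scale; subspaces are subsets of 'v. *)

datatype form_kind = Symplectic | Orthogonal | Unitary

definition fin_dim :: "('a::field \<Rightarrow> 'v::ab_group_add \<Rightarrow> 'v) \<Rightarrow> bool" where
  "fin_dim scale \<longleftrightarrow> (\<exists>S. finite S \<and> module.span scale S = UNIV)"

definition bilinear_form :: "('a::field \<Rightarrow> 'v::ab_group_add \<Rightarrow> 'v) \<Rightarrow> ('v \<Rightarrow> 'v \<Rightarrow> 'a) \<Rightarrow> bool" where
  "bilinear_form scale B \<longleftrightarrow>
     (\<forall>u v w. B (u + v) w = B u w + B v w) \<and> (\<forall>u v w. B u (v + w) = B u v + B u w) \<and>
     (\<forall>c u v. B (scale c u) v = c * B u v) \<and> (\<forall>c u v. B u (scale c v) = c * B u v)"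

definition involutory_automorphism :: "('a::field \<Rightarrow> 'a) \<Rightarrow> bool" where
  "involutory_automorphism \<sigma> \<longleftrightarrow>
     (\<forall>a b. \<sigma> (a + b) = \<sigma> a + \<sigma> b) \<and> (\<forall>a b. \<sigma> (a * b) = \<sigma> a * \<sigma> b) \<and>
     (\<forall>a. \<sigma> (\<sigma> a) = a) \<and> (\<exists>a. \<sigma> a \<noteq> a)"

definition hermitian_form :: "('a::field \<Rightarrow> 'v::ab_group_add \<Rightarrow> 'v) \<Rightarrow> ('a \<Rightarrow> 'a) \<Rightarrow> ('v \<Rightarrow> 'v \<Rightarrow> 'a) \<Rightarrow> bool" where
  "hermitian_form scale \<sigma> B \<longleftrightarrow>
     (\<forall>u v w. B (u + v) w = B u w + B v w) \<and> (\<forall>u v w. B u (v + w) = B u v + B u w) \<and>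
     (\<forall>c u v. B (scale c u) v = c * B u v) \<and> (\<forall>c u v. B u (scale c v) = \<sigma> c * B u v) \<and>
     (\<forall>u v. B v u = \<sigma> (B u v))"

definition quadratic_form :: "('a::field \<Rightarrow> 'v::ab_group_add \<Rightarrow> 'v) \<Rightarrow> ('v \<Rightarrow> 'a) \<Rightarrow> ('v \<Rightarrow> 'v \<Rightarrow> 'a) \<Rightarrow> bool" where
  "quadratic_form scale Q B \<longleftrightarrow>
     (\<forall>c v. Q (scale c v) = c ^ 2 * Q v) \<and> (\<forall>u v. B u v = Q (u + v) - Q u - Q v) \<and>
     bilinear_form scale B"

definition nondegenerate_form :: "('v::zero \<Rightarrow> 'v \<Rightarrow> 'a::field) \<Rightarrow> bool" where
  "nondegenerate_form B \<longleftrightarrow> (\<forall>v. (\<forall>u. B u v = 0) \<longrightarrow> v = 0)"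

definition nondegenerate_quadratic :: "('v::zero \<Rightarrow> 'a::field) \<Rightarrow> ('v \<Rightarrow> 'v \<Rightarrow> 'a) \<Rightarrow> bool" where
  "nondegenerate_quadratic Q B \<longleftrightarrow> (\<forall>v. (\<forall>u. B u v = 0) \<and> Q v = 0 \<longrightarrow> v = 0)"

definition perp :: "('v \<Rightarrow> 'v \<Rightarrow> 'a::zero) \<Rightarrow> 'v set \<Rightarrow> 'v set" where
  "perp B U = {v. \<forall>u\<in>U. B u v = 0}"

definition singular :: "form_kind \<Rightarrow> ('a::field \<Rightarrow> 'v::ab_group_add \<Rightarrow> 'v) \<Rightarrow> ('v \<Rightarrow> 'v \<Rightarrow> 'a) \<Rightarrow> ('v \<Rightarrow> 'a) \<Rightarrow> 'v set \<Rightarrow> bool" where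
  "singular t scale B Q U \<longleftrightarrow> module.subspace scale U \<and>
     (if t = Orthogonal then (\<forall>u\<in>U. Q u = 0) else (\<forall>u\<in>U. \<forall>v\<in>U. B u v = 0))"

(* For the orthogonal kind the
   dimensions 2\<omega>+1, 2\<omega>, 2\<omega>+2 with Witt index \<omega> are the parabolic, plus and minus types. *)
definition formed_space :: "form_kind \<Rightarrow> ('a::{field,finite} \<Rightarrow> 'v::ab_group_add \<Rightarrow> 'v) \<Rightarrow> ('v \<Rightarrow> 'v \<Rightarrow> 'a) \<Rightarrow> ('v \<Rightarrow> 'a) \<Rightarrow> nat \<Rightarrow> bool" where
  "formed_space t scale B Q \<omega> \<longleftrightarrow>
     vector_space scale \<and> fin_dim scale \<and>
     (case t of
        Symplectic \<Rightarrow> bilinear_form scale B \<and> (\<forall>v. B v v = 0) \<and> nondegenerate_form B \<and>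
                       vector_space.dim scale (UNIV::'v set) = 2 * \<omega>
      | Orthogonal \<Rightarrow> quadratic_form scale Q B \<and> nondegenerate_quadratic Q B \<and>
                       vector_space.dim scale (UNIV::'v set) \<in> {2 * \<omega> + 1, 2 * \<omega>, 2 * \<omega> + 2}
      | Unitary \<Rightarrow> (\<exists>\<sigma>. involutory_automorphism \<sigma> \<and> hermitian_form scale \<sigma> B) \<and> nondegenerate_form B \<and>
                       vector_space.dim scale (UNIV::'v set) \<in> {2 * \<omega> + 1, 2 * \<omega>}) \<and>
     (\<exists>U. singular t scale B Q U \<and> vector_space.dim scale U = \<omega>) \<and>
     (\<forall>U. singular t scale B Q U \<longrightarrow> vector_space.dim scale U \<le> \<omega>)"

definition pg_vertex :: "form_kind \<Rightarrow> ('a::field \<Rightarrow> 'v::ab_group_add \<Rightarrow> 'v) \<Rightarrow> ('v \<Rightarrow> 'v \<Rightarrow> 'a) \<Rightarrow> ('v \<Rightarrow> 'a) \<Rightarrow> nat \<Rightarrow> 'v set \<Rightarrow> bool" where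
  "pg_vertex t scale B Q k U \<longleftrightarrow> singular t scale B Q U \<and> vector_space.dim scale U = k"

definition pg_adj :: "form_kind \<Rightarrow> ('a::field \<Rightarrow> 'v::ab_group_add \<Rightarrow> 'v) \<Rightarrow> ('v \<Rightarrow> 'v \<Rightarrow> 'a) \<Rightarrow> ('v \<Rightarrow> 'a) \<Rightarrow> nat \<Rightarrow> 'v set \<Rightarrow> 'v set \<Rightarrow> bool" where
  "pg_adj t scale B Q k U W \<longleftrightarrow> pg_vertex t scale B Q k U \<and> pg_vertex t scale B Q k W \<and> U \<noteq> W \<and>
     singular t scale B Q (module.span scale (U \<union> W)) \<and>
     vector_space.dim scale (module.span scale (U \<union> W)) = k + 1"

definition pg_walk :: "form_kind \<Rightarrow> ('a::field \<Rightarrow> 'v::ab_group_add \<Rightarrow> 'v) \<Rightarrow> ('v \<Rightarrow> 'v \<Rightarrow> 'a) \<Rightarrow> ('v \<Rightarrow> 'a) \<Rightarrow> nat \<Rightarrow> 'v set list \<Rightarrow> 'v set \<Rightarrow> 'v set \<Rightarrow> bool" where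
  "pg_walk t scale B Q k P X Y \<longleftrightarrow> P \<noteq> [] \<and> hd P = X \<and> last P = Y \<and>
     (\<forall>U\<in>set P. pg_vertex t scale B Q k U) \<and>
     (\<forall>i. Suc i < length P \<longrightarrow> pg_adj t scale B Q k (P ! i) (P ! Suc i))"

definition pg_dist :: "form_kind \<Rightarrow> ('a::field \<Rightarrow> 'v::ab_group_add \<Rightarrow> 'v) \<Rightarrow> ('v \<Rightarrow> 'v \<Rightarrow> 'a) \<Rightarrow> ('v \<Rightarrow> 'a) \<Rightarrow> nat \<Rightarrow> 'v set \<Rightarrow> 'v set \<Rightarrow> nat" where
  "pg_dist t scale B Q k X Y = (LEAST n. \<exists>P. pg_walk t scale B Q k P X Y \<and> length P = Suc n)"

definition pg_geodesic :: "form_kind \<Rightarrow> ('a::field \<Rightarrow> 'v::ab_group_add \<Rightarrow> 'v) \<Rightarrow> ('v \<Rightarrow> 'v \<Rightarrow> 'a) \<Rightarrow> ('v \<Rightarrow> 'a) \<Rightarrow> nat \<Rightarrow> 'v set list \<Rightarrow> 'v set \<Rightarrow> 'v set \<Rightarrow> bool" where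
  "pg_geodesic t scale B Q k P X Y \<longleftrightarrow> pg_walk t scale B Q k P X Y \<and>
     length P = Suc (pg_dist t scale B Q k X Y)"

definition opposite :: "('v \<Rightarrow> 'v \<Rightarrow> 'a::zero) \<Rightarrow> 'v set \<Rightarrow> 'v set \<Rightarrow> bool" where
  "opposite B X Y \<longleftrightarrow> X \<noteq> Y \<and> perp B X \<inter> Y = X \<inter> Y"

end

(*
  Along a walk the dimension of the intersection with a fixed subspace changes by at most one per
  step, so d(X, Y) \<ge> k - dim (X \<inter> Y); for opposite X and Y the first step cannot enlarge the
  intersection with Y, which costs one more step. Conversely, if X and Y are not opposite, a vector
  of Y orthogonal to X but outside X, added to a suitable hyperplane of X, gives a neighbour meeting
  Y in one more dimension; if they are opposite, a singular vector orthogonal to X gives a neighbour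
  X0 with X0 \<inter> Y = X \<inter> Y that is not opposite to Y.

  Along a geodesic every vertex is spanned by its intersections with X and with Y, and these form
  flags in X and in Y. Triangular changes of bases adapted to the two flags do not change the flags,
  and Gaussian elimination with such changes turns the Gram matrix of the bases into a partial
  permutation matrix, which vanishes on and above the antidiagonal because consecutive vertices are
  orthogonal. In the opposite case a zero diagonal entry would give orthogonal subspaces of X and Y
  that are too large for the rank identity of the pair X, Y, so the matrix is the identity.
  Opposite vertices meeting only in 0, built one singular vector at a time, realise the diameter.
*)
theory Submission
  imports Defs
begin

section \<open>Reflexive sesquilinear forms\<close>

text \<open>The three kinds of formed spaces are treated uniformly: \<open>\<sigma>\<close> is the field automorphism of the
  form (the identity unless the form is Hermitian) and \<open>singular_vec\<close> singles out the singular
  vectors, namely all vectors for an alternating form, the zeros of \<open>Q\<close> for a quadratic form and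
  the isotropic vectors for a Hermitian form.\<close>

locale formed_vector_space = vector_space scale
  for scale :: "'a::field \<Rightarrow> 'v::ab_group_add \<Rightarrow> 'v" +
  fixes B :: "'v \<Rightarrow> 'v \<Rightarrow> 'a" and \<sigma> :: "'a \<Rightarrow> 'a" and singular_vec :: "'v \<Rightarrow> bool"
  assumes finite_spanning_set: "\<exists>S. finite S \<and> span S = UNIV"
    and B_add_left: "B (u + v) w = B u w + B v w"
    and B_add_right: "B u (v + w) = B u v + B u w"
    and B_scale_left: "B (scale c u) v = c * B u v"
    and B_scale_right: "B u (scale c v) = \<sigma> c * B u v"
    and \<sigma>_add: "\<sigma> (a + b) = \<sigma> a + \<sigma> b"
    and \<sigma>_\<sigma>: "\<sigma> (\<sigma> a) = a"
    and B_eq_0_commute: "B u v = 0 \<longleftrightarrow> B v u = 0"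
    and singular_vec_add: "singular_vec u \<Longrightarrow> singular_vec v \<Longrightarrow> B u v = 0 \<Longrightarrow> singular_vec (u + v)"
    and singular_vec_scale: "singular_vec u \<Longrightarrow> singular_vec (scale c u)"
    and singular_vec_B_self: "singular_vec u \<Longrightarrow> B u u = 0"
    and singular_radical_eq_0: "(\<forall>u. B u v = 0) \<Longrightarrow> singular_vec v \<Longrightarrow> v = 0"
    and singular_vec_shift: "singular_vec x \<Longrightarrow> B x y \<noteq> 0 \<Longrightarrow> \<exists>c. singular_vec (y + scale c x)"
begin

definition space_basis :: "'v set" where
  "space_basis = (SOME S. finite S \<and> independent S \<and> span S = UNIV)"

lemma space_basis: "finite space_basis \<and> independent space_basis \<and> span space_basis = UNIV"
proof -
  obtain S where S: "finite S" "span S = UNIV" using finite_spanning_set by blast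
  obtain T where T: "T \<subseteq> S" "independent T" "S \<subseteq> span T"
    using maximal_independent_subset[of S] by blast
  have "span T = UNIV" using S(2) span_mono[OF T(3)] by (auto simp: span_span)
  moreover have "finite T" using T(1) S(1) by (rule finite_subset)
  ultimately have "\<exists>S. finite S \<and> independent S \<and> span S = UNIV" using T(2) by blast
  then show ?thesis unfolding space_basis_def by (rule someI_ex)
qed

sublocale fd: finite_dimensional_vector_space scale space_basis
  by unfold_locales (simp_all add: space_basis)

lemma B_0_left [simp]: "B 0 v = 0"
  using B_add_left[of 0 0 v] by (metis add_0 add_cancel_right_right)

lemma B_0_right [simp]: "B u 0 = 0"
  using B_add_right[of u 0 0] by (metis add_0 add_cancel_right_right)

lemma B_diff_left: "B (u - v) w = B u w - B v w"
  using B_add_left[of "u - v" v w] by (simp add: algebra_simps)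

lemma B_diff_right: "B u (v - w) = B u v - B u w"
  using B_add_right[of u "v - w" w] by (simp add: algebra_simps)

lemma \<sigma>_eq_0_iff [simp]: "\<sigma> a = 0 \<longleftrightarrow> a = 0"
proof -
  have "\<sigma> 0 = 0" using \<sigma>_add[of 0 0] by (metis add_0 add_cancel_right_right)
  then show ?thesis by (metis \<sigma>_\<sigma>)
qed

lemma subspace_perp: "subspace (perp B S)"
  unfolding subspace_def perp_def by (auto simp: B_add_right B_scale_right)

lemma perp_antimono: "S \<subseteq> T \<Longrightarrow> perp B T \<subseteq> perp B S"
  unfolding perp_def by auto

lemma in_perp_iff_right: "v \<in> perp B S \<longleftrightarrow> (\<forall>u\<in>S. B v u = 0)"
  using B_eq_0_commute by (auto simp: perp_def)

lemma perp_span [simp]: "perp B (span S) = perp B S"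
proof
  show "perp B (span S) \<subseteq> perp B S" by (rule perp_antimono[OF span_superset])
  show "perp B S \<subseteq> perp B (span S)"
  proof
    fix v assume v: "v \<in> perp B S"
    have "subspace {u. B u v = 0}"
      unfolding subspace_def by (auto simp: B_add_left B_scale_left)
    then have "span S \<subseteq> {u. B u v = 0}"
      using v by (intro span_minimal) (auto simp: perp_def)
    then show "v \<in> perp B (span S)" by (auto simp: perp_def)
  qed
qed

lemma perp_span_insert: "v \<in> perp B (span (insert y H)) \<longleftrightarrow> B y v = 0 \<and> v \<in> perp B H"
  by (simp only: perp_span) (auto simp: perp_def)

lemma span_subset_perp_span:
  assumes "\<And>g h. g \<in> S \<Longrightarrow> h \<in> T \<Longrightarrow> B g h = 0"
  shows "span S \<subseteq> perp B (span T)"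
proof -
  have "S \<subseteq> perp B T" using assms B_eq_0_commute by (auto simp: perp_def)
  then show ?thesis by (simp add: span_minimal subspace_perp)
qed

lemma span_Un_span: "span (S \<union> span T) = span (S \<union> T)"
  unfolding span_eq
proof
  show "S \<union> span T \<subseteq> span (S \<union> T)"
    using span_mono[of T "S \<union> T"] span_superset[of "S \<union> T"] by blast
  show "S \<union> T \<subseteq> span (S \<union> span T)"
    using span_superset[of "S \<union> span T"] span_superset[of T] by blast
qed

lemma span_insert_cong: "span A = span A' \<Longrightarrow> span (insert v A) = span (insert v A')"
  using span_Un_span[of "{v}" A] span_Un_span[of "{v}" A'] by simp

lemma span_insert_scale_add:
  assumes "s \<in> span A" "c \<noteq> 0"
  shows "span (insert (scale c v + s) A) = span (insert v A)"
proof -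
  have "s \<in> span (insert v A)" using assms(1) span_mono[of A "insert v A"] by blast
  then have "scale c v + s \<in> span (insert v A)"
    using span_add[OF span_scale[OF span_base[OF insertI1]]] by blast
  moreover have "v \<in> span (insert (scale c v + s) A)"
  proof -
    have "s \<in> span (insert (scale c v + s) A)" using assms(1) span_mono[of A] by blast
    then have "(scale c v + s) - s \<in> span (insert (scale c v + s) A)"
      using span_diff[OF span_base[OF insertI1]] by blast
    then have "scale c v \<in> span (insert (scale c v + s) A)" by simp
    then have "scale (inverse c) (scale c v) \<in> span (insert (scale c v + s) A)" by (rule span_scale)
    then show ?thesis using assms(2) by simp
  qed
  ultimately show ?thesis
    unfolding span_eq using span_superset[of "insert v A"] span_superset[of "insert (scale c v + s) A"]
    by blast
qed

lemma span_Un_span_Un: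
  assumes "span W' = W"
  shows "span (span (S \<union> W) \<union> span (T \<union> W)) = span (S \<union> T \<union> W')"
proof -
  have "span (span (S \<union> W) \<union> span (T \<union> W)) = span (S \<union> W \<union> (T \<union> W))"
    by (metis span_Un_span sup_commute)
  also have "\<dots> = span (S \<union> T \<union> span W')" by (simp add: assms Un_ac)
  also have "\<dots> = span (S \<union> T \<union> W')" by (rule span_Un_span)
  finally show ?thesis .
qed

lemma dim_span_Un_Int:
  assumes "subspace U" "subspace W"
  shows "dim (span (U \<union> W)) + dim (U \<inter> W) = dim U + dim W"
  using fd.dim_sums_Int[OF assms]
  by (simp add: span_Un span_eq_iff[THEN iffD2, OF assms(1)] span_eq_iff[THEN iffD2, OF assms(2)])

lemma dim_span_insert_notin: "subspace H \<Longrightarrow> z \<notin> H \<Longrightarrow> dim (span (insert z H)) = dim H + 1"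
  by (metis dim_span fd.dim_insert span_eq_iff)

lemma subspace_between:
  assumes S: "subspace S" and T: "subspace T" and "S \<subseteq> T" and "dim S \<le> d" "d \<le> dim T"
  shows "\<exists>H. subspace H \<and> S \<subseteq> H \<and> H \<subseteq> T \<and> dim H = d"
proof -
  have "j \<le> dim T - dim S \<Longrightarrow> \<exists>H. subspace H \<and> S \<subseteq> H \<and> H \<subseteq> T \<and> dim H = dim S + j" for j
  proof (induction j)
    case 0
    then show ?case using S \<open>S \<subseteq> T\<close> by auto
  next
    case (Suc j)
    then obtain H where H: "subspace H" "S \<subseteq> H" "H \<subseteq> T" "dim H = dim S + j" by auto
    then have "H \<noteq> T" using Suc.prems by auto
    then obtain z where z: "z \<in> T" "z \<notin> H" using H(3) by auto
    have "dim (span (insert z H)) = dim H + 1" by (rule dim_span_insert_notin[OF H(1) z(2)])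
    moreover have "span (insert z H) \<subseteq> T" using T z H(3) by (intro span_minimal) auto
    moreover have "S \<subseteq> span (insert z H)" using H(2) span_superset by blast
    ultimately show ?case using H(4) by (intro exI[of _ "span (insert z H)"]) auto
  qed
  from this[of "d - dim S"] assms(4,5) show ?thesis by auto
qed

lemma hyperplane_Int:
  assumes T: "subspace T" and S: "subspace S" "S \<subseteq> T"
    and H: "subspace H" "H \<subseteq> T" "dim H + 1 = dim T" and v: "v \<in> S" "v \<notin> H"
  shows "dim (S \<inter> H) + 1 = dim S" and "span (insert v (S \<inter> H)) = S"
proof -
  have SH: "subspace (S \<inter> H)" using S(1) H(1) by (rule subspace_inter)
  have "dim (span (S \<union> H)) + dim (S \<inter> H) = dim S + dim H" by (rule dim_span_Un_Int[OF S(1) H(1)])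
  moreover have "span (S \<union> H) \<subseteq> T" using S(2) H(2) T by (intro span_minimal) auto
  then have "dim (span (S \<union> H)) \<le> dim T" by (rule fd.dim_subset)
  ultimately have le: "dim S \<le> dim (S \<inter> H) + 1" using H(3) by linarith
  have sub: "span (insert v (S \<inter> H)) \<subseteq> S" using S(1) v(1) by (intro span_minimal) auto
  have dim_v: "dim (span (insert v (S \<inter> H))) = dim (S \<inter> H) + 1"
    using dim_span_insert_notin[OF SH] v(2) by simp
  then have "dim (span (insert v (S \<inter> H))) \<le> dim S" using fd.dim_subset[OF sub] by simp
  then show "dim (S \<inter> H) + 1 = dim S" using le dim_v by linarith
  show "span (insert v (S \<inter> H)) = S"
    using fd.subspace_dim_equal[OF subspace_span S(1) sub] le dim_v by simp
qed

lemma exists_enumerated_basis: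
  assumes "subspace W"
  shows "\<exists>w. inj_on w {1..dim W} \<and> \<not> dependent (w ` {1..dim W}) \<and> span (w ` {1..dim W}) = W"
proof -
  obtain Bw where Bw: "finite Bw" "independent Bw" "span Bw = W" "card Bw = dim W"
    using fd.basis_subspace_exists[OF assms] by metis
  obtain h where "bij_betw h {1..card Bw} Bw" using ex_bij_betw_nat_finite_1[OF Bw(1)] by blast
  then show ?thesis using Bw by (intro exI[of _ h]) (simp add: bij_betw_def)
qed

lemma exists_flag_basis:
  assumes sub: "\<And>j. j \<le> m \<Longrightarrow> subspace (G j)" and mono: "\<And>j. j < m \<Longrightarrow> G j \<subseteq> G (Suc j)"
    and dim: "\<And>j. j \<le> m \<Longrightarrow> dim (G j) = dim (G 0) + j"
  shows "\<exists>v. \<forall>j\<le>m. span (v ` {1..j} \<union> G 0) = G j"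
proof -
  have "\<forall>j\<in>{1..m}. \<exists>w. w \<in> G j \<and> w \<notin> G (j - 1)"
  proof
    fix j assume j: "j \<in> {1..m}"
    have "dim (G (j - 1)) < dim (G j)" using dim[of j] dim[of "j - 1"] j by auto
    then show "\<exists>w. w \<in> G j \<and> w \<notin> G (j - 1)" using fd.dim_subset by (meson not_le subsetI)
  qed
  then obtain v where v: "\<forall>j\<in>{1..m}. v j \<in> G j \<and> v j \<notin> G (j - 1)" by metis
  have "span (v ` {1..j} \<union> G 0) = G j" if "j \<le> m" for j
    using that
  proof (induction j)
    case 0
    then show ?case using sub[of 0] by simp
  next
    case (Suc j)
    have G_j: "span (G j) = G j" using sub Suc.prems by simp
    have "Suc j \<in> {1..m}" using Suc.prems by simp
    then have v_j: "v (Suc j) \<in> G (Suc j)" "v (Suc j) \<notin> G j" using v by (metis diff_Suc_1)+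
    have "span (v ` {1..Suc j} \<union> G 0) = span (insert (v (Suc j)) (v ` {1..j} \<union> G 0))"
      by (simp add: atLeastAtMostSuc_conv)
    also have "\<dots> = span (insert (v (Suc j)) (G j))"
    proof (rule span_insert_cong)
      show "span (v ` {1..j} \<union> G 0) = span (G j)" unfolding G_j using Suc by simp
    qed
    also have "\<dots> = G (Suc j)"
    proof (rule fd.subspace_dim_equal[OF subspace_span sub[OF Suc.prems]])
      show "span (insert (v (Suc j)) (G j)) \<subseteq> G (Suc j)"
        using v_j mono[of j] Suc.prems sub[OF Suc.prems] by (intro span_minimal) auto
      have "v (Suc j) \<notin> span (G j)" unfolding G_j by (rule v_j(2))
      then show "dim (G (Suc j)) \<le> dim (span (insert (v (Suc j)) (G j)))"
        using dim[of j] dim[of "Suc j"] Suc.prems by (simp add: fd.dim_insert)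
    qed
    finally show ?case .
  qed
  then show ?thesis by blast
qed

lemma dim_le_dim_Int_kernel:
  assumes U: "subspace U" and f_add: "\<And>x y. f (x + y) = f x + f y"
    and f_scale: "\<And>c x. f (scale c x) = c * f x"
  shows "dim U \<le> dim (U \<inter> {x. f x = 0}) + 1"
proof (cases "\<forall>u\<in>U. f u = 0")
  case True
  then have "U \<inter> {x. f x = 0} = U" by auto
  then show ?thesis by simp
next
  case False
  then obtain u0 where u0: "u0 \<in> U" "f u0 \<noteq> 0" by auto
  have f_diff: "f (x - y) = f x - f y" for x y
    using f_add[of "x - y" y] by simp
  have "U \<subseteq> span (insert u0 (U \<inter> {x. f x = 0}))"
  proof
    fix u assume u: "u \<in> U"
    have "u - scale (f u / f u0) u0 \<in> U"
      using u u0(1) U by (simp add: subspace_diff subspace_scale)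
    moreover have "f (u - scale (f u / f u0) u0) = 0"
      using u0(2) by (simp add: f_diff f_scale)
    ultimately have "u - scale (f u / f u0) u0 \<in> span (U \<inter> {x. f x = 0})"
      by (simp add: span_base)
    then show "u \<in> span (insert u0 (U \<inter> {x. f x = 0}))"
      by (subst span_breakdown_eq) blast
  qed
  then have "dim U \<le> dim (insert u0 (U \<inter> {x. f x = 0}))" by (rule fd.dim_mono)
  also have "\<dots> \<le> dim (U \<inter> {x. f x = 0}) + 1" by (simp add: fd.dim_insert)
  finally show ?thesis .
qed

lemma dim_le_dim_Int_perp_card:
  assumes "finite S" "subspace U"
  shows "dim U \<le> dim (U \<inter> perp B S) + card S"
  using assms(1)
proof (induction S rule: finite_induct)
  case empty
  then show ?case by (simp add: perp_def)
next
  case (insert s S)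
  have "subspace (U \<inter> perp B S)" using assms(2) subspace_perp by (rule subspace_inter)
  then have "dim (U \<inter> perp B S) \<le> dim ((U \<inter> perp B S) \<inter> {x. B x s = 0}) + 1"
    by (rule dim_le_dim_Int_kernel) (auto simp: B_add_left B_scale_left)
  moreover have "(U \<inter> perp B S) \<inter> {x. B x s = 0} = U \<inter> perp B (insert s S)"
    using in_perp_iff_right by auto
  ultimately show ?case using insert by simp
qed

lemma dim_le_dim_Int_perp_single: "subspace U \<Longrightarrow> dim U \<le> dim (U \<inter> perp B {s}) + 1"
  using dim_le_dim_Int_perp_card[of "{s}" U] by simp

lemma hyperplane_perp:
  assumes X: "subspace X" and x: "x \<in> X" "B x y \<noteq> 0"
  shows "dim (X \<inter> perp B {y}) + 1 = dim X" and "span (insert x (X \<inter> perp B {y})) = X"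
proof -
  let ?H = "X \<inter> perp B {y}"
  have H: "subspace ?H" using X subspace_perp by (rule subspace_inter)
  have xH: "x \<notin> ?H" using x B_eq_0_commute by (auto simp: perp_def)
  have sub: "span (insert x ?H) \<subseteq> X" using X x by (intro span_minimal) auto
  have "dim X \<le> dim ?H + 1" by (rule dim_le_dim_Int_perp_single[OF X])
  moreover have "dim (span (insert x ?H)) = dim ?H + 1" by (rule dim_span_insert_notin[OF H xH])
  moreover have "dim (span (insert x ?H)) \<le> dim X" using sub by (rule fd.dim_subset)
  ultimately show d: "dim ?H + 1 = dim X" by linarith
  show "span (insert x ?H) = X"
    by (rule fd.subspace_dim_equal[OF subspace_span X sub])
      (use d dim_span_insert_notin[OF H xH] in simp)
qed

lemma dim_perp_rank_le:
  assumes U: "subspace U" and M: "subspace M"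
  shows "dim M + dim (U \<inter> perp B M) \<le> dim U + dim (M \<inter> perp B U)"
proof -
  define K where "K = U \<inter> perp B M"
  have K: "subspace K" unfolding K_def using U subspace_perp by (rule subspace_inter)
  obtain Bk where Bk: "finite Bk" "Bk \<subseteq> K" "independent Bk" "span Bk = K" "card Bk = dim K"
    using fd.basis_subspace_exists[OF K] by metis
  obtain Bu where Bu: "Bk \<subseteq> Bu" "Bu \<subseteq> U" "independent Bu" "U \<subseteq> span Bu"
    using maximal_independent_subset_extend[of Bk U] Bk K_def by blast
  have card_Bu: "card Bu = dim U" using basis_card_eq_dim[OF Bu(2) Bu(4) Bu(3)] .
  define E where "E = Bu - Bk"
  have fin_E: "finite E" using fd.finiteI_independent[OF Bu(3)] E_def by auto
  have card_E: "card E = dim U - dim K"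
    unfolding E_def using card_Diff_subset[OF Bk(1) Bu(1)] card_Bu Bk(5) by simp
  \<comment> \<open>the vectors of \<open>Bk\<close> are already orthogonal to \<open>M\<close>, so only those of \<open>E\<close> impose conditions\<close>
  have "M \<inter> perp B E \<subseteq> M \<inter> perp B U"
  proof
    fix m assume m: "m \<in> M \<inter> perp B E"
    have "m \<in> perp B Bu"
      using m Bk(2) B_eq_0_commute unfolding K_def E_def by (auto simp: perp_def)
    then have "m \<in> perp B (span Bu)" by simp
    then show "m \<in> M \<inter> perp B U" using perp_antimono[OF Bu(4)] m by auto
  qed
  then have "dim (M \<inter> perp B E) \<le> dim (M \<inter> perp B U)" by (rule fd.dim_subset)
  moreover have "dim M \<le> dim (M \<inter> perp B E) + card E" by (rule dim_le_dim_Int_perp_card[OF fin_E M])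
  moreover have "dim K \<le> dim U" unfolding K_def by (rule fd.dim_subset) auto
  ultimately show ?thesis using card_E by (simp add: K_def)
qed

lemma dim_perp_rank:
  assumes "subspace U" "subspace M"
  shows "dim M + dim (U \<inter> perp B M) = dim U + dim (M \<inter> perp B U)"
  using dim_perp_rank_le[OF assms] dim_perp_rank_le[OF assms(2,1)] by linarith

lemma perp_perp:
  assumes S: "subspace S"
  shows "perp B (perp B S) = span (S \<union> perp B UNIV)"
proof -
  let ?R = "perp B UNIV"
  have R_sub: "?R \<subseteq> perp B S" by (rule perp_antimono) simp
  have r1: "dim UNIV + dim (S \<inter> ?R) = dim S + dim (perp B S)"
    using dim_perp_rank[OF S subspace_UNIV] by simp
  have r2: "dim UNIV + dim ?R = dim (perp B S) + dim (perp B (perp B S))"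
    using dim_perp_rank[OF subspace_perp subspace_UNIV, of S] R_sub by (simp add: Int_absorb1)
  have g: "dim (span (S \<union> ?R)) + dim (S \<inter> ?R) = dim S + dim ?R"
    by (rule dim_span_Un_Int[OF S subspace_perp])
  have "span (S \<union> ?R) \<subseteq> perp B (perp B S)"
    by (rule span_minimal[OF _ subspace_perp]) (use B_eq_0_commute in \<open>auto simp: perp_def\<close>)
  moreover have "dim (perp B (perp B S)) \<le> dim (span (S \<union> ?R))" using r1 r2 g by linarith
  ultimately show ?thesis
    by (metis fd.subspace_dim_equal subspace_perp subspace_span)
qed

end

section \<open>Gaussian elimination of Gram matrices\<close>

definition partial_permutation_matrix :: "(nat \<Rightarrow> nat \<Rightarrow> 'a::zero_neq_one) \<Rightarrow> nat \<Rightarrow> nat \<Rightarrow> bool" where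
  "partial_permutation_matrix M m n \<longleftrightarrow>
    (\<forall>i\<in>{1..m}. (\<forall>j\<in>{1..n}. M i j = 0) \<or>
       (\<exists>p\<in>{1..n}. M i p = 1 \<and> (\<forall>j\<in>{1..n}. j \<noteq> p \<longrightarrow> M i j = 0))) \<and>
    (\<forall>i1\<in>{1..m}. \<forall>i2\<in>{1..m}. \<forall>j\<in>{1..n}. i1 \<noteq> i2 \<longrightarrow> M i1 j \<noteq> 0 \<longrightarrow> M i2 j = 0)"

lemma partial_permutation_matrix_cong:
  assumes M: "partial_permutation_matrix M m n"
    and eq: "\<And>i j. i \<in> {1..m} \<Longrightarrow> j \<in> {1..n} \<Longrightarrow> M' i j = M i j"
  shows "partial_permutation_matrix M' m n"
  unfolding partial_permutation_matrix_def
proof (intro conjI ballI impI)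
  fix i assume i: "i \<in> {1..m}"
  then have "(\<forall>j\<in>{1..n}. M i j = 0) \<or> (\<exists>p\<in>{1..n}. M i p = 1 \<and> (\<forall>j\<in>{1..n}. j \<noteq> p \<longrightarrow> M i j = 0))"
    using M unfolding partial_permutation_matrix_def by blast
  then show "(\<forall>j\<in>{1..n}. M' i j = 0) \<or> (\<exists>p\<in>{1..n}. M' i p = 1 \<and> (\<forall>j\<in>{1..n}. j \<noteq> p \<longrightarrow> M' i j = 0))"
    using eq[OF i] by auto
next
  fix i1 i2 j assume "i1 \<in> {1..m}" "i2 \<in> {1..m}" "j \<in> {1..n}" "i1 \<noteq> i2" "M' i1 j \<noteq> 0"
  then show "M' i2 j = 0" using M eq unfolding partial_permutation_matrix_def by auto
qed

lemma partial_permutation_matrix_SucI: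
  assumes M: "partial_permutation_matrix M m n"
    and row: "(\<forall>j\<in>{1..n}. M (Suc m) j = 0) \<or>
      (\<exists>p\<in>{1..n}. M (Suc m) p = 1 \<and> (\<forall>j\<in>{1..n}. j \<noteq> p \<longrightarrow> M (Suc m) j = 0))"
    and col: "\<And>j. j \<in> {1..n} \<Longrightarrow> M (Suc m) j \<noteq> 0 \<Longrightarrow> \<forall>i\<in>{1..m}. M i j = 0"
  shows "partial_permutation_matrix M (Suc m) n"
  unfolding partial_permutation_matrix_def
proof (intro conjI ballI impI)
  fix i assume "i \<in> {1..Suc m}"
  then show "(\<forall>j\<in>{1..n}. M i j = 0) \<or> (\<exists>p\<in>{1..n}. M i p = 1 \<and> (\<forall>j\<in>{1..n}. j \<noteq> p \<longrightarrow> M i j = 0))"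
    using M row unfolding partial_permutation_matrix_def by (cases "i = Suc m") auto
next
  fix i1 i2 j assume i: "i1 \<in> {1..Suc m}" "i2 \<in> {1..Suc m}" "j \<in> {1..n}" "i1 \<noteq> i2" "M i1 j \<noteq> 0"
  consider "i1 = Suc m" | "i2 = Suc m" | "i1 \<in> {1..m}" "i2 \<in> {1..m}" using i(1,2) by fastforce
  then show "M i2 j = 0"
  proof cases
    case 1
    then show ?thesis using col[OF i(3)] i by fastforce
  next
    case 2
    then show ?thesis using col[OF i(3)] i by fastforce
  next
    case 3
    then show ?thesis using M i unfolding partial_permutation_matrix_def by blast
  qed
qed

lemma partial_permutation_matrix_lower_rows:
  assumes M: "partial_permutation_matrix M m m"
    and upper: "\<forall>i j. 1 \<le> i \<and> i \<le> j \<and> j \<le> m \<longrightarrow> M i j = 0"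
  shows "\<forall>i\<in>{2..m}. (\<forall>j\<in>{1..<i}. M i j = 0) \<or>
           (\<exists>!i'. i' \<in> {1..<i} \<and> M i i' = 1 \<and> (\<forall>j\<in>{1..<i}. j \<noteq> i' \<longrightarrow> M i j = 0))"
proof
  fix i assume i: "i \<in> {2..m}"
  show "(\<forall>j\<in>{1..<i}. M i j = 0) \<or>
    (\<exists>!i'. i' \<in> {1..<i} \<and> M i i' = 1 \<and> (\<forall>j\<in>{1..<i}. j \<noteq> i' \<longrightarrow> M i j = 0))"
  proof (cases "\<forall>j\<in>{1..m}. M i j = 0")
    case True
    then show ?thesis using i by auto
  next
    case False
    have "i \<in> {1..m}" using i by simp
    then obtain p where p: "p \<in> {1..m}" "M i p = 1" "\<forall>j\<in>{1..m}. j \<noteq> p \<longrightarrow> M i j = 0"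
      using M False unfolding partial_permutation_matrix_def by blast
    have "p < i" using upper p(1,2) i by (cases "p < i") auto
    then have "p \<in> {1..<i} \<and> M i p = 1 \<and> (\<forall>j\<in>{1..<i}. j \<noteq> p \<longrightarrow> M i j = 0)"
      using p i by auto
    moreover have "q = p" if "q \<in> {1..<i}" "M i q = 1" for q
    proof (rule ccontr)
      assume "q \<noteq> p"
      then have "M i q = 0" using p(3) that(1) i by auto
      then show False using that(2) by simp
    qed
    ultimately show ?thesis by blast
  qed
qed

lemma partial_permutation_matrix_distinct_pivots:
  assumes M: "partial_permutation_matrix M m m"
  shows "\<forall>i1 i2 i1' i2'. i1 \<in> {2..m} \<and> i2 \<in> {2..m} \<and> i1 \<noteq> i2 \<and>
           i1' \<in> {1..<i1} \<and> M i1 i1' = 1 \<and> (\<forall>j\<in>{1..<i1}. j \<noteq> i1' \<longrightarrow> M i1 j = 0) \<and>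
           i2' \<in> {1..<i2} \<and> M i2 i2' = 1 \<and> (\<forall>j\<in>{1..<i2}. j \<noteq> i2' \<longrightarrow> M i2 j = 0) \<longrightarrow>
           i1' \<noteq> i2'"
proof (intro allI impI notI)
  fix i1 i2 i1' i2'
  assume h: "i1 \<in> {2..m} \<and> i2 \<in> {2..m} \<and> i1 \<noteq> i2 \<and>
         i1' \<in> {1..<i1} \<and> M i1 i1' = 1 \<and> (\<forall>j\<in>{1..<i1}. j \<noteq> i1' \<longrightarrow> M i1 j = 0) \<and>
         i2' \<in> {1..<i2} \<and> M i2 i2' = 1 \<and> (\<forall>j\<in>{1..<i2}. j \<noteq> i2' \<longrightarrow> M i2 j = 0)"
    and eq: "i1' = i2'"
  have cols: "\<And>i1 i2 j. i1 \<in> {1..m} \<Longrightarrow> i2 \<in> {1..m} \<Longrightarrow> j \<in> {1..m} \<Longrightarrow> i1 \<noteq> i2 \<Longrightarrow>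
      M i1 j \<noteq> 0 \<Longrightarrow> M i2 j = 0"
    using M unfolding partial_permutation_matrix_def by blast
  have "M i2 i1' = 0" using cols[of i1 i2 i1'] h by auto
  then show False using h eq by simp
qed

lemma partial_permutation_matrix_diagonal:
  assumes "partial_permutation_matrix M m m" "i \<in> {1..m}" "M i i \<noteq> 0"
  shows "M i i = 1" and "\<And>j. j \<in> {1..m} \<Longrightarrow> j \<noteq> i \<Longrightarrow> M i j = 0"
proof -
  obtain p where p: "p \<in> {1..m}" "M i p = 1" "\<forall>j\<in>{1..m}. j \<noteq> p \<longrightarrow> M i j = 0"
    using assms unfolding partial_permutation_matrix_def by blast
  have "p = i"
  proof (rule ccontr)
    assume "p \<noteq> i"
    then show False using p(3) assms(2,3) by auto
  qed
  then show "M i i = 1" "\<And>j. j \<in> {1..m} \<Longrightarrow> j \<noteq> i \<Longrightarrow> M i j = 0" using p by auto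
qed

lemma image_reverse_atLeastAtMost:
  assumes "1 \<le> j"
  shows "(\<lambda>i. u (Suc m - i)) ` {j..m} = u ` {1..Suc m - j}"
proof -
  have "(\<lambda>i. Suc m - i) ` {j..m} = {1..Suc m - j}"
  proof
    show "{1..Suc m - j} \<subseteq> (\<lambda>i. Suc m - i) ` {j..m}"
    proof
      fix l assume "l \<in> {1..Suc m - j}"
      then have "l = Suc m - (Suc m - l)" "Suc m - l \<in> {j..m}" using assms by auto
      then show "l \<in> (\<lambda>i. Suc m - i) ` {j..m}" by blast
    qed
  qed (use assms in auto)
  then show ?thesis by (metis image_image)
qed

context formed_vector_space
begin

definition lower_tri_rebase :: "(nat \<Rightarrow> 'v) \<Rightarrow> (nat \<Rightarrow> 'v) \<Rightarrow> nat \<Rightarrow> bool" where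
  "lower_tri_rebase x x' m \<longleftrightarrow> (\<forall>i\<in>{1..m}. \<exists>c. c \<noteq> 0 \<and> x' i - scale c (x i) \<in> span (x ` {1..<i}))"

definition upper_tri_rebase :: "(nat \<Rightarrow> 'v) \<Rightarrow> (nat \<Rightarrow> 'v) \<Rightarrow> nat \<Rightarrow> bool" where
  "upper_tri_rebase y y' n \<longleftrightarrow> (\<forall>j\<in>{1..n}. \<exists>d. d \<noteq> 0 \<and> y' j - scale d (y j) \<in> span (y ` {j<..n}))"

lemma lower_tri_rebase_span:
  assumes "lower_tri_rebase x x' m" "j \<le> m"
  shows "span (x' ` {1..j} \<union> A) = span (x ` {1..j} \<union> A)"
  using assms(2)
proof (induction j)
  case (Suc j)
  then have IH: "span (x' ` {1..j} \<union> A) = span (x ` {1..j} \<union> A)" by simp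
  have Suc_j: "{1..Suc j} = insert (Suc j) {1..j}" by auto
  have "Suc j \<in> {1..m}" using Suc.prems by simp
  then obtain c where c: "c \<noteq> 0" "x' (Suc j) - scale c (x (Suc j)) \<in> span (x ` {1..<Suc j})"
    using assms(1) unfolding lower_tri_rebase_def by blast
  have "span (x ` {1..<Suc j}) \<subseteq> span (x' ` {1..j} \<union> A)"
    unfolding IH by (rule span_mono) auto
  then have s: "x' (Suc j) - scale c (x (Suc j)) \<in> span (x' ` {1..j} \<union> A)" using c(2) by blast
  have "span (x' ` {1..Suc j} \<union> A) =
      span (insert (scale c (x (Suc j)) + (x' (Suc j) - scale c (x (Suc j)))) (x' ` {1..j} \<union> A))"
    unfolding Suc_j by simp
  also have "\<dots> = span (insert (x (Suc j)) (x' ` {1..j} \<union> A))" by (rule span_insert_scale_add[OF s c(1)])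
  also have "\<dots> = span (insert (x (Suc j)) (x ` {1..j} \<union> A))" by (rule span_insert_cong[OF IH])
  finally show ?case unfolding Suc_j by simp
qed simp

lemma upper_tri_rebase_span:
  assumes "upper_tri_rebase y y' n" "1 \<le> j" "j \<le> Suc n"
  shows "span (y' ` {j..n} \<union> A) = span (y ` {j..n} \<union> A)"
  using assms(3)
proof (induction j rule: inc_induct)
  case (step l)
  have l: "l \<in> {1..n}" using step.hyps assms(2) by auto
  have l_n: "{l..n} = insert l {Suc l..n}" using l by auto
  obtain d where d: "d \<noteq> 0" "y' l - scale d (y l) \<in> span (y ` {l<..n})"
    using assms(1) l unfolding upper_tri_rebase_def by blast
  have "span (y ` {l<..n}) \<subseteq> span (y' ` {Suc l..n} \<union> A)"
    unfolding step.IH by (rule span_mono) auto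
  then have s: "y' l - scale d (y l) \<in> span (y' ` {Suc l..n} \<union> A)" using d(2) by blast
  have "span (y' ` {l..n} \<union> A) =
      span (insert (scale d (y l) + (y' l - scale d (y l))) (y' ` {Suc l..n} \<union> A))"
    unfolding l_n by simp
  also have "\<dots> = span (insert (y l) (y' ` {Suc l..n} \<union> A))" by (rule span_insert_scale_add[OF s d(1)])
  also have "\<dots> = span (insert (y l) (y ` {Suc l..n} \<union> A))" by (rule span_insert_cong[OF step.IH])
  finally show ?case unfolding l_n by simp
qed simp

lemma lower_tri_rebase_Suc:
  assumes "lower_tri_rebase x x' m" "c \<noteq> 0" "v - scale c (x (Suc m)) \<in> span (x ` {1..m})"
  shows "lower_tri_rebase x (x'(Suc m := v)) (Suc m)"
  unfolding lower_tri_rebase_def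
proof
  fix i assume i: "i \<in> {1..Suc m}"
  show "\<exists>c. c \<noteq> 0 \<and> (x'(Suc m := v)) i - scale c (x i) \<in> span (x ` {1..<i})"
  proof (cases "i = Suc m")
    case True
    then show ?thesis using assms(2,3) by (auto simp: atLeastLessThanSuc_atLeastAtMost)
  next
    case False
    then show ?thesis using assms(1) i unfolding lower_tri_rebase_def by auto
  qed
qed

abbreviation gram :: "(nat \<Rightarrow> 'v) \<Rightarrow> (nat \<Rightarrow> 'v) \<Rightarrow> nat \<Rightarrow> nat \<Rightarrow> 'a" where
  "gram x y \<equiv> \<lambda>i j. B (x i) (y j)"

lemma eliminate_pivot_columns:
  assumes M: "partial_permutation_matrix (gram x y) m n" and "a \<le> m"
  shows "\<exists>r'. r' - r \<in> span (x ` {1..a}) \<and>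
     (\<forall>l\<in>{1..n}. (\<exists>b\<in>{1..a}. B (x b) (y l) \<noteq> 0) \<longrightarrow> B r' (y l) = 0)"
  using \<open>a \<le> m\<close>
proof (induction a)
  case 0
  then show ?case by (intro exI[of _ r]) simp
next
  case (Suc a)
  then obtain r' where r': "r' - r \<in> span (x ` {1..a})"
     "\<forall>l\<in>{1..n}. (\<exists>b\<in>{1..a}. B (x b) (y l) \<noteq> 0) \<longrightarrow> B r' (y l) = 0" by auto
  have span_Suc: "span (x ` {1..a}) \<subseteq> span (x ` {1..Suc a})" by (rule span_mono) auto
  have earlier_row: "\<exists>b\<in>{1..a}. B (x b) (y l) \<noteq> 0"
    if "\<exists>b\<in>{1..Suc a}. B (x b) (y l) \<noteq> 0" "B (x (Suc a)) (y l) = 0" for l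
    using that by (metis atLeastAtMost_iff le_SucE)
  have "Suc a \<in> {1..m}" using Suc.prems by simp
  then consider "\<forall>j\<in>{1..n}. B (x (Suc a)) (y j) = 0"
    | p where "p \<in> {1..n}" "B (x (Suc a)) (y p) = 1" "\<forall>j\<in>{1..n}. j \<noteq> p \<longrightarrow> B (x (Suc a)) (y j) = 0"
    using M unfolding partial_permutation_matrix_def by blast
  then show ?case
  proof cases
    case 1
    then have "B r' (y l) = 0" if "l \<in> {1..n}" "\<exists>b\<in>{1..Suc a}. B (x b) (y l) \<noteq> 0" for l
      using that r'(2) earlier_row by blast
    then show ?thesis using r'(1) span_Suc by blast
  next
    case (2 p)
    define r'' where "r'' = r' - scale (B r' (y p)) (x (Suc a))"
    have B_r'': "B r'' (y l) = B r' (y l) - B r' (y p) * B (x (Suc a)) (y l)" for l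
      unfolding r''_def by (simp add: B_diff_left B_scale_left)
    have "r' - r \<in> span (x ` {1..Suc a})" using r'(1) span_Suc by blast
    moreover have "scale (B r' (y p)) (x (Suc a)) \<in> span (x ` {1..Suc a})"
      by (intro span_scale span_base) auto
    ultimately have "(r' - r) - scale (B r' (y p)) (x (Suc a)) \<in> span (x ` {1..Suc a})"
      by (rule span_diff)
    then have "r'' - r \<in> span (x ` {1..Suc a})" unfolding r''_def by (simp add: algebra_simps)
    moreover have "B r'' (y l) = 0" if "l \<in> {1..n}" "\<exists>b\<in>{1..Suc a}. B (x b) (y l) \<noteq> 0" for l
    proof (cases "l = p")
      case True
      then show ?thesis using B_r'' 2 by simp
    next
      case False
      then have "B (x (Suc a)) (y l) = 0" using 2 that(1) by auto
      then show ?thesis using B_r'' r'(2) that earlier_row by simp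
    qed
    ultimately show ?thesis by blast
  qed
qed

lemma exists_pivot_rebase:
  assumes ut: "upper_tri_rebase y y' n" and nz: "\<exists>l\<in>{1..n}. B r (y' l) \<noteq> 0"
  shows "\<exists>p y''. p \<in> {1..n} \<and> B r (y' p) \<noteq> 0 \<and> upper_tri_rebase y y'' n \<and>
     (\<forall>u l. B u (y' p) = 0 \<longrightarrow> B u (y'' l) = B u (y' l)) \<and>
     (\<forall>l\<in>{1..n}. B r (y'' l) = (if l = p then B r (y' p) else 0))"
proof -
  define L where "L = {l\<in>{1..n}. B r (y' l) \<noteq> 0}"
  have "finite L" "L \<noteq> {}" using nz by (auto simp: L_def)
  \<comment> \<open>the last nonzero column is the pivot: the columns before it may absorb multiples of it\<close>
  define p where "p = Max L"
  have p: "p \<in> {1..n}" "B r (y' p) \<noteq> 0" using Max_in[OF \<open>finite L\<close> \<open>L \<noteq> {}\<close>] by (auto simp: L_def p_def)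
  have after_p: "B r (y' l) = 0" if "l \<in> {1..n}" "p < l" for l
  proof (rule ccontr)
    assume "B r (y' l) \<noteq> 0"
    then have "l \<le> p" using that(1) Max_ge[OF \<open>finite L\<close>, of l] by (simp add: L_def p_def)
    then show False using that(2) by simp
  qed
  define \<beta> where "\<beta> = B r (y' p)"
  define y'' where "y'' l = (if l < p then y' l - scale (\<sigma> (B r (y' l) / \<beta>)) (y' p) else y' l)" for l
  have B_y'': "B u (y'' l) = (if l < p then B u (y' l) - (B r (y' l) / \<beta>) * B u (y' p) else B u (y' l))"
    for u l unfolding y''_def by (simp add: B_diff_right B_scale_right \<sigma>_\<sigma>)
  have tri: "upper_tri_rebase y y'' n"
    unfolding upper_tri_rebase_def
  proof
    fix l assume l: "l \<in> {1..n}"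
    obtain d where d: "d \<noteq> 0" "y' l - scale d (y l) \<in> span (y ` {l<..n})"
      using ut l unfolding upper_tri_rebase_def by blast
    have "y'' l - scale d (y l) \<in> span (y ` {l<..n})"
    proof (cases "l < p")
      case True
      have "y' p \<in> span (y ` {p..n})"
        using upper_tri_rebase_span[OF ut, of p "{}"] p(1) span_superset[of "y' ` {p..n}"] by auto
      also have "span (y ` {p..n}) \<subseteq> span (y ` {l<..n})" using True by (intro span_mono) auto
      finally have "y' p \<in> span (y ` {l<..n})" .
      then have "(y' l - scale d (y l)) - scale (\<sigma> (B r (y' l) / \<beta>)) (y' p) \<in> span (y ` {l<..n})"
        using span_diff[OF d(2) span_scale] by blast
      then show ?thesis using True unfolding y''_def by (simp add: algebra_simps)
    next
      case False
      then show ?thesis using d(2) unfolding y''_def by simp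
    qed
    then show "\<exists>d. d \<noteq> 0 \<and> y'' l - scale d (y l) \<in> span (y ` {l<..n})" using d(1) by blast
  qed
  have row: "\<forall>l\<in>{1..n}. B r (y'' l) = (if l = p then \<beta> else 0)"
    using B_y''[of r] after_p p(2) unfolding \<beta>_def by auto
  have "\<forall>u l. B u (y' p) = 0 \<longrightarrow> B u (y'' l) = B u (y' l)" using B_y'' by simp
  then show ?thesis using p tri row unfolding \<beta>_def by blast
qed

lemma partial_permutation_matrix_pivot_row:
  assumes M: "partial_permutation_matrix (gram x' y') m n" and ut: "upper_tri_rebase y y' n"
    and cleared: "\<forall>l\<in>{1..n}. (\<exists>b\<in>{1..m}. B (x' b) (y' l) \<noteq> 0) \<longrightarrow> B r (y' l) = 0"
    and nz: "\<exists>l\<in>{1..n}. B r (y' l) \<noteq> 0"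
  shows "\<exists>c y''. c \<noteq> 0 \<and> upper_tri_rebase y y'' n \<and>
    partial_permutation_matrix (gram (x'(Suc m := scale c r)) y'') (Suc m) n"
proof -
  obtain p y'' where p: "p \<in> {1..n}" "B r (y' p) \<noteq> 0" and ut'': "upper_tri_rebase y y'' n"
    and same: "\<And>u l. B u (y' p) = 0 \<Longrightarrow> B u (y'' l) = B u (y' l)"
    and row: "\<And>l. l \<in> {1..n} \<Longrightarrow> B r (y'' l) = (if l = p then B r (y' p) else 0)"
    using exists_pivot_rebase[OF ut nz] by blast
  have col_p: "B (x' b) (y' p) = 0" if "b \<in> {1..m}" for b
    using cleared p that by blast
  define c where "c = inverse (B r (y' p))"
  have row_v: "B (scale c r) (y'' l) = (if l = p then 1 else 0)" if "l \<in> {1..n}" for l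
    using row[OF that] p(2) unfolding c_def by (simp add: B_scale_left)
  have "partial_permutation_matrix (gram (x'(Suc m := scale c r)) y'') (Suc m) n"
  proof (rule partial_permutation_matrix_SucI)
    show "partial_permutation_matrix (gram (x'(Suc m := scale c r)) y'') m n"
      by (rule partial_permutation_matrix_cong[OF M]) (simp add: same col_p)
    show "(\<forall>j\<in>{1..n}. gram (x'(Suc m := scale c r)) y'' (Suc m) j = 0) \<or>
      (\<exists>p\<in>{1..n}. gram (x'(Suc m := scale c r)) y'' (Suc m) p = 1 \<and>
        (\<forall>j\<in>{1..n}. j \<noteq> p \<longrightarrow> gram (x'(Suc m := scale c r)) y'' (Suc m) j = 0))"
      using row_v p(1) by auto
    show "\<forall>i\<in>{1..m}. gram (x'(Suc m := scale c r)) y'' i j = 0"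
      if "j \<in> {1..n}" "gram (x'(Suc m := scale c r)) y'' (Suc m) j \<noteq> 0" for j
      using that row_v same col_p by (auto split: if_splits)
  qed
  moreover have "c \<noteq> 0" using p(2) unfolding c_def by simp
  ultimately show ?thesis using ut'' by blast
qed

lemma exists_tri_rebase_partial_permutation:
  "\<exists>x' y'. lower_tri_rebase x x' m \<and> upper_tri_rebase y y' n \<and>
     partial_permutation_matrix (gram x' y') m n"
proof (induction m)
  case 0
  have "upper_tri_rebase y y n" unfolding upper_tri_rebase_def by (auto intro!: exI[of _ 1] simp: span_zero)
  moreover have "lower_tri_rebase x x 0" "partial_permutation_matrix (gram x y) 0 n"
    unfolding lower_tri_rebase_def partial_permutation_matrix_def by auto
  ultimately show ?case by blast
next
  case (Suc m)
  then obtain x' y' where lt: "lower_tri_rebase x x' m" and ut: "upper_tri_rebase y y' n"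
    and M: "partial_permutation_matrix (gram x' y') m n" by blast
  obtain r where r: "r - x (Suc m) \<in> span (x' ` {1..m})"
     and cleared: "\<forall>l\<in>{1..n}. (\<exists>b\<in>{1..m}. B (x' b) (y' l) \<noteq> 0) \<longrightarrow> B r (y' l) = 0"
    using eliminate_pivot_columns[OF M le_refl, of "x (Suc m)"] by blast
  have r_x: "r - x (Suc m) \<in> span (x ` {1..m})"
    using r lower_tri_rebase_span[OF lt le_refl, of "{}"] by simp
  obtain c y'' where c: "c \<noteq> 0" and ut'': "upper_tri_rebase y y'' n"
    and M'': "partial_permutation_matrix (gram (x'(Suc m := scale c r)) y'') (Suc m) n"
  proof (cases "\<forall>l\<in>{1..n}. B r (y' l) = 0")
    case True
    have "partial_permutation_matrix (gram (x'(Suc m := scale 1 r)) y') (Suc m) n"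
    proof (rule partial_permutation_matrix_SucI)
      show "partial_permutation_matrix (gram (x'(Suc m := scale 1 r)) y') m n"
        by (rule partial_permutation_matrix_cong[OF M]) simp
    qed (use True in simp_all)
    then show ?thesis using that[of 1] ut by simp
  next
    case False
    then show ?thesis using that partial_permutation_matrix_pivot_row[OF M ut cleared] by blast
  qed
  have "scale c r - scale c (x (Suc m)) = scale c (r - x (Suc m))" by (simp add: scale_right_diff_distrib)
  then have "lower_tri_rebase x (x'(Suc m := scale c r)) (Suc m)"
    using lower_tri_rebase_Suc[OF lt c] r_x by (simp add: span_scale)
  then show ?case using ut'' M'' by blast
qed

end

section \<open>The polar Grassmann graph\<close>

locale polar_grassmann = formed_vector_space scale B \<sigma> singular_vec
  for scale :: "'a::field \<Rightarrow> 'v::ab_group_add \<Rightarrow> 'v" and B \<sigma> singular_vec +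
  fixes t :: form_kind and Q :: "'v \<Rightarrow> 'a" and \<omega> k :: nat
  assumes singular_iff: "singular t scale B Q U \<longleftrightarrow>
      subspace U \<and> (\<forall>u\<in>U. singular_vec u) \<and> (\<forall>u\<in>U. \<forall>v\<in>U. B u v = 0)"
    and ex_singular_dim_\<omega>: "\<exists>U. singular t scale B Q U \<and> dim U = \<omega>"
    and singular_dim_le_\<omega>: "singular t scale B Q U \<Longrightarrow> dim U \<le> \<omega>"
    and k_pos: "1 \<le> k" and k_less_\<omega>: "k < \<omega>"
begin

abbreviation "sing \<equiv> singular t scale B Q"
abbreviation "vert \<equiv> pg_vertex t scale B Q k"
abbreviation "adj \<equiv> pg_adj t scale B Q k"
abbreviation "walk \<equiv> pg_walk t scale B Q k"
abbreviation "gdist \<equiv> pg_dist t scale B Q k"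

lemma sing_subspace: "sing U \<Longrightarrow> subspace U"
  by (simp add: singular_iff)

lemma sing_subset: "sing U \<Longrightarrow> subspace W \<Longrightarrow> W \<subseteq> U \<Longrightarrow> sing W"
  unfolding singular_iff by blast

lemma sing_singular_vec: "sing U \<Longrightarrow> u \<in> U \<Longrightarrow> singular_vec u"
  by (simp add: singular_iff)

lemma sing_subset_perp: "sing U \<Longrightarrow> U \<subseteq> perp B U"
  by (auto simp: singular_iff perp_def)

lemma sing_span_Un:
  assumes U: "sing U" and W: "sing W" and UW: "W \<subseteq> perp B U"
  shows "sing (span (U \<union> W))"
proof -
  have "span U = U" "span W = W" using U W by (simp_all add: sing_subspace)
  then have decomp: "x \<in> span (U \<union> W) \<Longrightarrow> \<exists>u w. x = u + w \<and> u \<in> U \<and> w \<in> W" for x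
    by (auto simp: span_Un)
  have orth: "B u w = 0" "B w u = 0" if "u \<in> U" "w \<in> W" for u w
    using that UW B_eq_0_commute by (auto simp: perp_def)
  show ?thesis unfolding singular_iff
  proof (intro conjI ballI)
    fix x assume "x \<in> span (U \<union> W)"
    then obtain u w where "x = u + w" "u \<in> U" "w \<in> W" using decomp by blast
    then show "singular_vec x"
      using U W orth by (auto intro: singular_vec_add simp: singular_iff)
  next
    fix x y assume "x \<in> span (U \<union> W)" "y \<in> span (U \<union> W)"
    then obtain u w u' w' where "x = u + w" "u \<in> U" "w \<in> W" "y = u' + w'" "u' \<in> U" "w' \<in> W"
      using decomp by meson
    then show "B x y = 0"
      using U W orth by (simp add: B_add_left B_add_right singular_iff)
  qed simp
qed

lemma sing_span_singleton: "singular_vec z \<Longrightarrow> sing (span {z})"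
  unfolding singular_iff
  by (auto simp: span_singleton B_scale_left B_scale_right singular_vec_B_self
      intro: singular_vec_scale) (metis span_singleton subspace_span)

lemma sing_span_insert:
  assumes U: "sing U" and z: "singular_vec z" "z \<in> perp B U"
  shows "sing (span (insert z U))"
proof -
  have "span {z} \<subseteq> perp B U" using z by (simp add: span_minimal subspace_perp)
  then have "sing (span (U \<union> span {z}))" by (rule sing_span_Un[OF U sing_span_singleton[OF z(1)]])
  moreover have "span (U \<union> span {z}) = span (insert z U)"
    by (simp add: span_Un_span)
  ultimately show ?thesis by simp
qed

lemma vert_sing: "vert U \<Longrightarrow> sing U"
  by (simp add: pg_vertex_def)

lemma vert_dim: "vert U \<Longrightarrow> dim U = k"
  by (simp add: pg_vertex_def)

lemma vert_subspace: "vert U \<Longrightarrow> subspace U"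
  by (simp add: pg_vertex_def sing_subspace)

lemma vert_eq_if_subset: "vert U \<Longrightarrow> vert W \<Longrightarrow> U \<subseteq> W \<Longrightarrow> U = W"
  by (simp add: fd.subspace_dim_equal vert_dim vert_subspace)

lemma vert_eq_if_dim_Int:
  assumes "vert U" "vert W" "k \<le> dim (U \<inter> W)"
  shows "U = W"
proof -
  have "U \<inter> W = U" "U \<inter> W = W"
    using assms by (metis fd.subspace_dim_equal inf_le1 inf_le2 subspace_inter vert_dim vert_subspace)+
  then show ?thesis by simp
qed

lemma dim_Int_less_k: "vert U \<Longrightarrow> vert W \<Longrightarrow> U \<noteq> W \<Longrightarrow> dim (U \<inter> W) < k"
  using vert_eq_if_dim_Int by (meson not_less)

lemma adj_iff: "adj U W \<longleftrightarrow> vert U \<and> vert W \<and> dim (U \<inter> W) + 1 = k \<and> W \<subseteq> perp B U"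
proof (cases "vert U \<and> vert W")
  case True
  then have U: "sing U" "dim U = k" and W: "sing W" "dim W = k"
    by (simp_all add: vert_sing vert_dim)
  have grassmann: "dim (span (U \<union> W)) + dim (U \<inter> W) = 2 * k"
    using dim_span_Un_Int U W by (simp add: sing_subspace)
  have "sing (span (U \<union> W)) \<longleftrightarrow> W \<subseteq> perp B U"
  proof
    assume "sing (span (U \<union> W))"
    then have "U \<union> W \<subseteq> perp B (U \<union> W)"
      by (metis perp_span sing_subset_perp span_superset subset_trans)
    then show "W \<subseteq> perp B U" by (auto simp: perp_def)
  qed (rule sing_span_Un[OF U(1) W(1)])
  moreover have "U \<noteq> W" if "dim (U \<inter> W) + 1 = k" using that U(2) by auto
  ultimately show ?thesis
    using True grassmann unfolding pg_adj_def by auto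
qed (auto simp: pg_adj_def)

lemma adj_sym: "adj U W \<Longrightarrow> adj W U"
  unfolding pg_adj_def by (auto simp: sup_commute)

lemma adj_vert: "adj U W \<Longrightarrow> vert U \<and> vert W"
  by (simp add: adj_iff)

lemma dim_Int_adj_le:
  assumes a: "adj U U'" and Z: "subspace Z"
  shows "dim (U' \<inter> Z) \<le> dim (U \<inter> Z) + 1"
proof -
  have U: "subspace U" "subspace U'" "dim U' = k" and D: "dim (U \<inter> U') + 1 = k"
    using a by (auto simp: adj_iff vert_subspace vert_dim)
  let ?A = "U' \<inter> Z" and ?D = "U \<inter> U'"
  have "dim (span (?A \<union> ?D)) + dim (?A \<inter> ?D) = dim ?A + dim ?D"
    using U Z by (intro dim_span_Un_Int) (auto intro: subspace_inter)
  moreover have "span (?A \<union> ?D) \<subseteq> U'" using U by (intro span_minimal) auto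
  then have "dim (span (?A \<union> ?D)) \<le> k" using U fd.dim_subset by metis
  moreover have "dim (?A \<inter> ?D) \<le> dim (U \<inter> Z)" by (rule fd.dim_subset) auto
  ultimately show ?thesis using D by linarith
qed

lemma walk_nonempty: "walk P X Y \<Longrightarrow> P \<noteq> []"
  by (simp add: pg_walk_def)

lemma walk_first: "walk P X Y \<Longrightarrow> P ! 0 = X"
  unfolding pg_walk_def by (metis hd_conv_nth)

lemma walk_last: "walk P X Y \<Longrightarrow> P ! (length P - 1) = Y"
  unfolding pg_walk_def by (metis last_conv_nth)

lemma walk_adj: "walk P X Y \<Longrightarrow> Suc i < length P \<Longrightarrow> adj (P ! i) (P ! Suc i)"
  by (simp add: pg_walk_def)

lemma walk_vert: "walk P X Y \<Longrightarrow> i < length P \<Longrightarrow> vert (P ! i)"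
  by (simp add: pg_walk_def)

lemma walk_vert_ends: "walk P X Y \<Longrightarrow> vert X \<and> vert Y"
  unfolding pg_walk_def by auto

lemma walk_singleton: "vert X \<Longrightarrow> walk [X] X X"
  by (simp add: pg_walk_def)

lemma walk_Cons:
  assumes a: "adj X X'" and w: "walk P X' Y"
  shows "walk (X # P) X Y"
  unfolding pg_walk_def
proof (intro conjI allI impI ballI)
  show "last (X # P) = Y" using w walk_nonempty[OF w] unfolding pg_walk_def by simp
  show "vert U" if "U \<in> set (X # P)" for U
    using that adj_vert[OF a] w unfolding pg_walk_def by auto
  show "adj ((X # P) ! i) ((X # P) ! Suc i)" if "Suc i < length (X # P)" for i
    using that a walk_first[OF w] walk_adj[OF w, of "i - 1"] by (cases i) auto
qed simp_all

lemma walk_drop: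
  assumes w: "walk P X Y" and i: "i < length P"
  shows "walk (drop i P) (P ! i) Y"
  using assms set_drop_subset[of i P] unfolding pg_walk_def
  by (auto simp: hd_drop_conv_nth last_drop)

lemma walk_take:
  assumes w: "walk P X Y" and i: "i < length P"
  shows "walk (take (Suc i) P) X (P ! i)"
  unfolding pg_walk_def
proof (intro conjI allI impI ballI)
  show "take (Suc i) P \<noteq> []" using i by (cases P) auto
  show "hd (take (Suc i) P) = X" using w i unfolding pg_walk_def by simp
  show "last (take (Suc i) P) = P ! i" using i by (simp add: take_Suc_conv_app_nth)
  show "vert U" if "U \<in> set (take (Suc i) P)" for U
    using that w set_take_subset unfolding pg_walk_def by fastforce
  show "adj (take (Suc i) P ! j) (take (Suc i) P ! Suc j)" if "Suc j < length (take (Suc i) P)" for j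
    using that walk_adj[OF w, of j] by simp
qed

lemma walk_dim_Int_change:
  assumes w: "walk P X Y" and Z: "subspace Z" and "i \<le> j" "j < length P"
  shows "dim (P ! j \<inter> Z) \<le> dim (P ! i \<inter> Z) + (j - i) \<and>
         dim (P ! i \<inter> Z) \<le> dim (P ! j \<inter> Z) + (j - i)"
  using assms(3,4)
proof (induction j rule: dec_induct)
  case (step j)
  then have a: "adj (P ! j) (P ! Suc j)" using walk_adj[OF w] by simp
  show ?case
    using step dim_Int_adj_le[OF a Z] dim_Int_adj_le[OF adj_sym[OF a] Z] by linarith
qed simp

lemma walk_length_ge:
  assumes w: "walk P X Y"
  shows "k \<le> dim (X \<inter> Y) + (length P - 1)"
proof -
  have Y: "vert Y" using walk_vert_ends[OF w] by simp
  have "dim (P ! (length P - 1) \<inter> Y) \<le> dim (P ! 0 \<inter> Y) + (length P - 1)"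
    using walk_dim_Int_change[OF w vert_subspace[OF Y], of 0 "length P - 1"] walk_nonempty[OF w]
    by simp
  then show ?thesis using walk_first[OF w] walk_last[OF w] Y by (simp add: vert_dim)
qed

lemma gdist_le: "walk P X Y \<Longrightarrow> gdist X Y \<le> length P - 1"
  unfolding pg_dist_def by (rule Least_le) (auto simp: walk_nonempty)

lemma gdist_eqI:
  assumes "walk P X Y" "length P = Suc n" and "\<And>P'. walk P' X Y \<Longrightarrow> Suc n \<le> length P'"
  shows "gdist X Y = n"
  unfolding pg_dist_def
  by (rule Least_equality) (use assms in fastforce)+

subsection \<open>Distances\<close>

lemma adj_span_insert:
  assumes X: "vert X" and H: "subspace H" "H \<subseteq> X" "dim H + 1 = k"
    and y: "singular_vec y" "y \<in> perp B X" "y \<notin> X"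
  shows "adj X (span (insert y H))"
proof -
  let ?X' = "span (insert y H)"
  have "sing H" using sing_subset[OF vert_sing[OF X] H(1,2)] .
  moreover have "y \<in> perp B H" using perp_antimono[OF H(2)] y(2) by auto
  ultimately have "sing ?X'" using sing_span_insert y(1) by blast
  moreover have "dim ?X' = k" using dim_span_insert_notin[OF H(1)] H y(3) by auto
  ultimately have X': "vert ?X'" by (simp add: pg_vertex_def)
  have "H \<subseteq> perp B X" using H(2) sing_subset_perp[OF vert_sing[OF X]] by auto
  then have perp: "?X' \<subseteq> perp B X" using y(2) by (intro span_minimal subspace_perp) auto
  have "X \<noteq> ?X'" using y(3) span_superset[of "insert y H"] by auto
  then have "dim (X \<inter> ?X') < k" by (rule dim_Int_less_k[OF X X'])
  moreover have "dim H \<le> dim (X \<inter> ?X')"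
    using H(2) span_superset[of "insert y H"] by (intro fd.dim_subset) auto
  ultimately show ?thesis using X X' perp H(3) by (simp add: adj_iff)
qed

lemma opposite_Int_perp:
  assumes X: "vert X" and Y: "vert Y" and opp: "opposite B X Y"
  shows "X \<inter> perp B Y = X \<inter> Y"
proof -
  have sub: "X \<inter> Y \<subseteq> X \<inter> perp B Y" using sing_subset_perp[OF vert_sing[OF Y]] by auto
  have "dim Y + dim (X \<inter> perp B Y) = dim X + dim (Y \<inter> perp B X)"
    by (rule dim_perp_rank[OF vert_subspace[OF X] vert_subspace[OF Y]])
  moreover have "Y \<inter> perp B X = X \<inter> Y" using opp unfolding opposite_def by auto
  ultimately have "dim (X \<inter> perp B Y) \<le> dim (X \<inter> Y)" using X Y by (simp add: vert_dim)
  then show ?thesis using X Y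
    by (metis fd.subspace_dim_equal sub subspace_inter subspace_perp vert_subspace)
qed

lemma opposite_adj_Int_subset:
  assumes "opposite B X Y" "adj X X'"
  shows "X' \<inter> Y \<subseteq> X \<inter> Y"
proof -
  have "X' \<subseteq> perp B X" using assms(2) by (simp add: adj_iff)
  then show ?thesis using assms(1) unfolding opposite_def by auto
qed

lemma not_opposite_witness:
  assumes "vert X" "X \<noteq> Y" "\<not> opposite B X Y"
  shows "\<exists>y\<in>Y. y \<in> perp B X \<and> y \<notin> X"
proof -
  have "X \<inter> Y \<subseteq> perp B X \<inter> Y" using sing_subset_perp[OF vert_sing[OF assms(1)]] by auto
  moreover have "perp B X \<inter> Y \<noteq> X \<inter> Y" using assms(2,3) unfolding opposite_def by auto
  ultimately show ?thesis by auto
qed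

lemma adj_if_dim_Int_Suc:
  assumes X: "vert X" and Y: "vert Y" and "\<not> opposite B X Y" and d: "dim (X \<inter> Y) + 1 = k"
  shows "adj X Y"
proof -
  have "X \<noteq> Y"
  proof
    assume "X = Y"
    then have "dim (X \<inter> Y) = k" using X by (simp add: vert_dim)
    then show False using d by simp
  qed
  then obtain y where y: "y \<in> Y" "y \<in> perp B X" "y \<notin> X"
    using not_opposite_witness assms by blast
  have "adj X (span (insert y (X \<inter> Y)))"
    using X Y y d sing_singular_vec[OF vert_sing[OF Y] y(1)]
    by (intro adj_span_insert) (auto simp: vert_subspace subspace_inter)
  moreover have "span (insert y (X \<inter> Y)) = Y"
    using calculation Y y(1) by (metis adj_vert inf_le2 insert_subset span_minimal vert_eq_if_subset
      vert_subspace)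
  ultimately show ?thesis by simp
qed

lemma exists_hyperplane_perp_outside:
  assumes X: "vert X" and Y: "vert Y" and d: "dim (X \<inter> Y) + 1 < k" and y: "y \<in> Y"
  shows "\<exists>H y2. subspace H \<and> X \<inter> Y \<subseteq> H \<and> H \<subseteq> X \<and> dim H + 1 = k \<and>
           y2 \<in> Y \<and> y2 \<notin> span (insert y (X \<inter> Y)) \<and> H \<subseteq> perp B {y2}"
proof -
  let ?W = "X \<inter> Y"
  have "\<not> Y \<subseteq> span (insert y ?W)"
  proof
    assume "Y \<subseteq> span (insert y ?W)"
    then have "dim Y \<le> dim (span (insert y ?W))" by (rule fd.dim_subset)
    also have "\<dots> = dim (insert y ?W)" by simp
    also have "\<dots> \<le> dim ?W + 1" by (simp add: fd.dim_insert)
    finally show False using d Y by (simp add: vert_dim)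
  qed
  then obtain y2 where y2: "y2 \<in> Y" "y2 \<notin> span (insert y ?W)" by auto
  let ?T = "X \<inter> perp B {y2}"
  have T: "subspace ?T" using vert_subspace[OF X] subspace_perp by (rule subspace_inter)
  have "?W \<subseteq> ?T"
  proof
    fix w assume w: "w \<in> ?W"
    then have "B y2 w = 0" using sing_subset_perp[OF vert_sing[OF Y]] y2(1) unfolding perp_def by blast
    then show "w \<in> ?T" using w by (simp add: perp_def)
  qed
  moreover have "dim ?W \<le> k - 1" using d by simp
  moreover have "k - 1 \<le> dim ?T"
    using dim_le_dim_Int_perp_single[OF vert_subspace[OF X], of y2] X by (simp add: vert_dim)
  moreover have "subspace ?W" using X Y by (simp add: subspace_inter vert_subspace)
  ultimately obtain H where "subspace H" "?W \<subseteq> H" "H \<subseteq> ?T" "dim H = k - 1"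
    using subspace_between[OF _ T] by blast
  moreover have "dim H + 1 = k" using \<open>dim H = k - 1\<close> k_pos by simp
  ultimately show ?thesis using y2 by blast
qed

lemma not_opposite_step:
  assumes X: "vert X" and Y: "vert Y" and "X \<noteq> Y" and "\<not> opposite B X Y"
    and d: "dim (X \<inter> Y) + 1 < k"
  shows "\<exists>X'. adj X X' \<and> dim (X' \<inter> Y) = dim (X \<inter> Y) + 1 \<and> X' \<noteq> Y \<and> \<not> opposite B X' Y"
proof -
  let ?W = "X \<inter> Y"
  obtain y where y: "y \<in> Y" "y \<in> perp B X" "y \<notin> X" using not_opposite_witness assms by blast
  obtain H y2 where H: "subspace H" "?W \<subseteq> H" "H \<subseteq> X" "dim H + 1 = k"
    and y2: "y2 \<in> Y" "y2 \<notin> span (insert y ?W)" "H \<subseteq> perp B {y2}"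
    using exists_hyperplane_perp_outside[OF X Y d y(1)] by blast
  define X' where "X' = span (insert y H)"
  have adj: "adj X X'"
    unfolding X'_def using sing_singular_vec[OF vert_sing[OF Y] y(1)] y
    by (intro adj_span_insert[OF X H(1,3,4)])
  have "span (insert y ?W) \<subseteq> X' \<inter> Y"
    using H(2) y(1) vert_subspace[OF Y] span_superset[of "insert y H"] unfolding X'_def
    by (intro span_minimal) (auto intro: subspace_inter)
  then have "dim ?W + 1 \<le> dim (X' \<inter> Y)"
    using dim_span_insert_notin[of ?W y] y X Y
    by (metis IntD1 fd.dim_subset subspace_inter vert_subspace)
  moreover have "dim (X' \<inter> Y) \<le> dim ?W + 1" by (rule dim_Int_adj_le[OF adj vert_subspace[OF Y]])
  ultimately have dim_X'Y: "dim (X' \<inter> Y) = dim ?W + 1" by simp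
  have "B y y2 = 0"
    using y(1) y2(1) sing_subset_perp[OF vert_sing[OF Y]] by (auto simp: perp_def)
  then have y2_perp: "y2 \<in> perp B X'"
    unfolding X'_def perp_span_insert using y2(3) B_eq_0_commute by (auto simp: perp_def)
  have y2_notin: "y2 \<notin> X'"
  proof
    assume "y2 \<in> X'"
    then obtain c where "y2 - scale c y \<in> span H" unfolding X'_def using span_breakdown_eq by blast
    then have c: "y2 - scale c y \<in> H" using H(1) by (metis span_eq_iff)
    moreover have "y2 - scale c y \<in> Y"
      using y2(1) y(1) vert_subspace[OF Y] by (simp add: subspace_diff subspace_scale)
    ultimately have "y2 - scale c y \<in> span ?W" using H(3) span_base by blast
    then show False using y2(2) span_breakdown_eq by blast
  qed
  have "\<not> opposite B X' Y" using y2 y2_perp y2_notin unfolding opposite_def by auto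
  then show ?thesis using adj dim_X'Y y2_notin y2(1) by blast
qed

lemma walk_if_not_opposite:
  "vert X \<Longrightarrow> vert Y \<Longrightarrow> X \<noteq> Y \<Longrightarrow> \<not> opposite B X Y \<Longrightarrow>
   \<exists>P. walk P X Y \<and> length P = Suc (k - dim (X \<inter> Y))"
proof (induction "k - dim (X \<inter> Y)" arbitrary: X rule: less_induct)
  case less
  note X = less.prems(1) and Y = less.prems(2)
  have less_k: "dim (X \<inter> Y) < k" using dim_Int_less_k less.prems(1-3) by blast
  show ?case
  proof (cases "dim (X \<inter> Y) + 1 = k")
    case True
    then have "adj X Y" by (rule adj_if_dim_Int_Suc[OF X Y less.prems(4)])
    then have "walk [X, Y] X Y" using walk_Cons walk_singleton Y by blast
    then show ?thesis using True by (intro exI[of _ "[X, Y]"]) simp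
  next
    case False
    then have "dim (X \<inter> Y) + 1 < k" using less_k by simp
    then obtain X' where X': "adj X X'" "dim (X' \<inter> Y) = dim (X \<inter> Y) + 1" "X' \<noteq> Y"
      "\<not> opposite B X' Y"
      using not_opposite_step[OF X Y less.prems(3,4)] by blast
    have "k - dim (X' \<inter> Y) < k - dim (X \<inter> Y)" using X'(2) less_k by simp
    then obtain P where P: "walk P X' Y" "length P = Suc (k - dim (X' \<inter> Y))"
      using less.hyps[OF _ _ Y X'(3,4)] adj_vert[OF X'(1)] by blast
    show ?thesis
      using walk_Cons[OF X'(1) P(1)] P(2) X'(2) less_k by (intro exI[of _ "X # P"]) auto
  qed
qed

lemma gdist_not_opposite:
  assumes "vert X" "vert Y" "X \<noteq> Y" "\<not> opposite B X Y"
  shows "gdist X Y = k - dim (X \<inter> Y)"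
proof -
  obtain P where "walk P X Y" "length P = Suc (k - dim (X \<inter> Y))"
    using walk_if_not_opposite[OF assms] by blast
  then show ?thesis
  proof (rule gdist_eqI)
    fix P' assume w: "walk P' X Y"
    then have "length P' \<noteq> 0" using walk_nonempty by blast
    then show "Suc (k - dim (X \<inter> Y)) \<le> length P'" using walk_length_ge[OF w] by linarith
  qed
qed

lemma exists_singular_perp:
  assumes U: "sing U" and d: "dim U < \<omega>"
  shows "\<exists>z. singular_vec z \<and> z \<in> perp B U \<and> z \<notin> U"
proof (rule ccontr)
  assume no: "\<not> ?thesis"
  obtain M where M: "sing M" "dim M = \<omega>" using ex_singular_dim_\<omega> by blast
  have sU: "subspace U" and sM: "subspace M" using U M sing_subspace by auto
  \<comment> \<open>by maximality of \<open>M\<close>, both \<open>M \<inter> U\<^sup>\<perp>\<close> and \<open>U \<inter> M\<^sup>\<perp>\<close> reduce to \<open>M \<inter> U\<close>\<close>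
  have "M \<inter> perp B U = M \<inter> U"
  proof
    show "M \<inter> perp B U \<subseteq> M \<inter> U" using no sing_singular_vec[OF M(1)] by blast
    show "M \<inter> U \<subseteq> M \<inter> perp B U" using sing_subset_perp[OF U] by blast
  qed
  moreover have "U \<inter> perp B M = U \<inter> M"
  proof
    let ?K = "U \<inter> perp B M"
    have "sing ?K" by (rule sing_subset[OF U subspace_inter[OF sU subspace_perp]]) auto
    then have "sing (span (M \<union> ?K))" by (rule sing_span_Un[OF M(1)]) (auto simp: perp_def)
    then have "dim (span (M \<union> ?K)) \<le> dim M" using singular_dim_le_\<omega> M(2) by metis
    moreover have "M \<subseteq> span (M \<union> ?K)" using span_superset by blast
    ultimately have "span (M \<union> ?K) = M"
      using fd.subspace_dim_equal[OF sM subspace_span] by (metis M(2))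
    then show "?K \<subseteq> U \<inter> M" using span_superset[of "M \<union> ?K"] by blast
    show "U \<inter> M \<subseteq> ?K" using sing_subset_perp[OF M(1)] by (auto simp: perp_def)
  qed
  ultimately have "dim M = dim U" using dim_perp_rank[OF sU sM] by (simp add: Int_commute)
  then show False using d M(2) by simp
qed

lemma exists_singular_perp_outside:
  assumes X: "vert X" and y: "singular_vec y" and x: "x \<in> X" "B x y \<noteq> 0"
  shows "\<exists>z. singular_vec z \<and> z \<in> perp B X \<and> B y z = 0 \<and> z \<notin> span (insert y (X \<inter> perp B {y}))"
proof -
  let ?H = "X \<inter> perp B {y}"
  let ?U = "span (insert y ?H)"
  have sH: "subspace ?H" using vert_subspace[OF X] subspace_perp by (rule subspace_inter)
  have dH: "dim ?H + 1 = k" using hyperplane_perp(1)[OF vert_subspace[OF X] x] X by (simp add: vert_dim)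
  have yH: "y \<in> perp B ?H" using B_eq_0_commute by (auto simp: perp_def)
  have y_notin: "y \<notin> ?H"
  proof
    assume "y \<in> ?H"
    then have "y \<in> perp B X" using sing_subset_perp[OF vert_sing[OF X]] by auto
    then show False using x by (simp add: perp_def)
  qed
  have "sing ?U"
    using sing_span_insert[OF sing_subset[OF vert_sing[OF X] sH] y yH] by auto
  moreover have "dim ?U < \<omega>" using dim_span_insert_notin[OF sH y_notin] dH k_less_\<omega> by simp
  ultimately obtain z where z: "singular_vec z" "z \<in> perp B ?U" "z \<notin> ?U"
    using exists_singular_perp by blast
  have yU: "y \<in> ?U" and HU: "?H \<subseteq> ?U" using span_superset[of "insert y ?H"] by auto
  \<comment> \<open>correct \<open>z\<close> by a multiple of \<open>y\<close> to make it orthogonal to \<open>x\<close>, and hence to \<open>X = \<langle>x, H\<rangle>\<close>\<close>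
  define z' where "z' = z + scale (\<sigma> (- B x z / B x y)) y"
  have Bzy: "B z y = 0" using z(2) yU by (simp add: in_perp_iff_right)
  have "singular_vec z'"
    unfolding z'_def using z(1) y Bzy by (intro singular_vec_add singular_vec_scale) (simp_all add: B_scale_right)
  moreover have Byz': "B y z' = 0"
    using z(2) yU singular_vec_B_self[OF y] unfolding z'_def by (simp add: B_add_right B_scale_right perp_def)
  moreover have "z' \<in> perp B X"
  proof -
    have "B x z' = 0" unfolding z'_def using x(2) by (simp add: B_add_right B_scale_right \<sigma>_\<sigma>)
    moreover have "z' \<in> perp B ?H"
      using z(2) HU yH unfolding z'_def
      by (intro subspace_add[OF subspace_perp] subspace_scale[OF subspace_perp]) (auto simp: perp_def)
    ultimately have "z' \<in> perp B (span (insert x ?H))" unfolding perp_span_insert by simp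
    then show ?thesis using hyperplane_perp(2)[OF vert_subspace[OF X] x] by simp
  qed
  moreover have "z' \<notin> ?U"
  proof
    assume "z' \<in> ?U"
    then have "z' - scale (\<sigma> (- B x z / B x y)) y \<in> ?U" using yU by (intro span_diff span_scale) auto
    then show False using z(3) unfolding z'_def by simp
  qed
  ultimately show ?thesis by blast
qed

lemma opposite_step:
  assumes X: "vert X" and Y: "vert Y" and opp: "opposite B X Y"
  shows "\<exists>X0. adj X X0 \<and> X0 \<inter> Y = X \<inter> Y \<and> X0 \<noteq> Y \<and> \<not> opposite B X0 Y"
proof -
  have "\<not> Y \<subseteq> X" using opp vert_eq_if_subset[OF Y X] unfolding opposite_def by auto
  then obtain y where y: "y \<in> Y" "y \<notin> X" by auto
  then have "y \<notin> perp B X" using opp unfolding opposite_def by blast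
  then obtain x where x: "x \<in> X" "B x y \<noteq> 0" unfolding perp_def by auto
  have y_sv: "singular_vec y" using sing_singular_vec[OF vert_sing[OF Y] y(1)] .
  let ?H = "X \<inter> perp B {y}"
  obtain z where z: "singular_vec z" "z \<in> perp B X" "B y z = 0" "z \<notin> span (insert y ?H)"
    using exists_singular_perp_outside[OF X y_sv x] by blast
  have sH: "subspace ?H" using vert_subspace[OF X] subspace_perp by (rule subspace_inter)
  have dH: "dim ?H + 1 = k" using hyperplane_perp(1)[OF vert_subspace[OF X] x] X by (simp add: vert_dim)
  have z_notin: "z \<notin> X" using z(3,4) span_superset[of "insert y ?H"] by (auto simp: perp_def)
  define X0 where "X0 = span (insert z ?H)"
  have adj: "adj X X0" unfolding X0_def using adj_span_insert[OF X sH _ dH z(1,2) z_notin] by simp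
  have "y \<in> perp B X0"
    unfolding X0_def perp_span_insert using z(3) B_eq_0_commute by (auto simp: perp_def)
  moreover have "y \<notin> X0"
  proof
    assume "y \<in> X0"
    then obtain d where "y - scale d z \<in> span ?H" unfolding X0_def using span_breakdown_eq by blast
    then have d: "y - scale d z \<in> ?H" using sH by (metis span_eq_iff)
    have "d \<noteq> 0" using d y(2) by auto
    have "y - (y - scale d z) \<in> span (insert y ?H)"
      using d by (intro span_diff span_base) auto
    then have "scale d z \<in> span (insert y ?H)" by simp
    then have "scale (inverse d) (scale d z) \<in> span (insert y ?H)" by (rule span_scale)
    then show False using \<open>d \<noteq> 0\<close> z(4) by simp
  qed
  moreover have "X0 \<inter> Y = X \<inter> Y"
  proof
    show "X0 \<inter> Y \<subseteq> X \<inter> Y" by (rule opposite_adj_Int_subset[OF opp adj])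
    show "X \<inter> Y \<subseteq> X0 \<inter> Y"
      using sing_subset_perp[OF vert_sing[OF Y]] y(1) span_superset[of "insert z ?H"]
      unfolding X0_def by (auto simp: perp_def)
  qed
  ultimately show ?thesis using adj y(1) unfolding opposite_def by blast
qed

lemma walk_length_ge_opposite:
  assumes opp: "opposite B X Y" and w: "walk P X Y"
  shows "Suc (Suc (k - dim (X \<inter> Y))) \<le> length P"
proof -
  have "X \<noteq> Y" using opp unfolding opposite_def by simp
  then have "length P \<noteq> 1" using walk_first[OF w] walk_last[OF w] by auto
  then have len: "2 \<le> length P" using walk_nonempty[OF w] by (cases P) (auto simp: Suc_le_eq)
  then have "adj X (P ! 1)" using walk_adj[OF w, of 0] walk_first[OF w] by simp
  then have "dim (P ! 1 \<inter> Y) \<le> dim (X \<inter> Y)"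
    using opposite_adj_Int_subset[OF opp] by (simp add: fd.dim_subset)
  moreover have "k \<le> dim (P ! 1 \<inter> Y) + (length (drop 1 P) - 1)"
    using walk_drop[OF w, of 1] len by (intro walk_length_ge) simp
  ultimately show ?thesis using len by simp
qed

lemma walk_if_opposite:
  assumes "vert X" "vert Y" "opposite B X Y"
  shows "\<exists>P. walk P X Y \<and> length P = Suc (Suc (k - dim (X \<inter> Y)))"
proof -
  obtain X0 where X0: "adj X X0" "X0 \<inter> Y = X \<inter> Y" "X0 \<noteq> Y" "\<not> opposite B X0 Y"
    using opposite_step[OF assms] by blast
  then obtain P where "walk P X0 Y" "length P = Suc (k - dim (X \<inter> Y))"
    using walk_if_not_opposite adj_vert assms(2) by metis
  then show ?thesis using walk_Cons[OF X0(1)] by (intro exI[of _ "X # P"]) simp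
qed

lemma gdist_opposite:
  assumes "vert X" "vert Y" "opposite B X Y"
  shows "gdist X Y = Suc (k - dim (X \<inter> Y))"
proof -
  obtain P where "walk P X Y" "length P = Suc (Suc (k - dim (X \<inter> Y)))"
    using walk_if_opposite[OF assms] by blast
  then show ?thesis by (rule gdist_eqI) (rule walk_length_ge_opposite[OF assms(3)])
qed

subsection \<open>Geodesics\<close>

text \<open>A \<^emph>\<open>tight\<close> walk from \<open>X\<close> to \<open>Y\<close> takes the least number \<open>k - dim (X \<inter> Y)\<close> of steps permitted by
  \<open>walk_length_ge\<close>: geodesics between vertices that are not opposite are tight, and so
  is a geodesic between opposite vertices once its first vertex is removed.\<close>

lemma tight_walk_parts:
  assumes w: "walk P X Y" and len: "length P = Suc m" and m: "m + dim (X \<inter> Y) = k" and i: "i \<le> m"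
  shows "X \<inter> Y \<subseteq> P ! i" and "dim (P ! i \<inter> X) + i = k" and "dim (P ! i \<inter> Y) + (m - i) = k"
    and "P ! i = span ((P ! i \<inter> X) \<union> (P ! i \<inter> Y))"
proof -
  have ends: "P ! 0 = X" "P ! m = Y" using walk_first[OF w] walk_last[OF w] len by auto
  have X: "vert X" and Y: "vert Y" and Pi: "vert (P ! i)"
    using walk_vert_ends[OF w] walk_vert[OF w] len i by auto
  have sX: "subspace X" and sY: "subspace Y" and sP: "subspace (P ! i)" using X Y Pi vert_subspace by auto
  have dX: "dim X = k" "dim Y = k" "dim (P ! i) = k" using X Y Pi vert_dim by auto
  \<comment> \<open>along the walk, the intersections with \<open>X\<close> and with \<open>Y\<close> must change by exactly one per step\<close>
  have "dim (P ! 0 \<inter> X) \<le> dim (P ! i \<inter> X) + i" "dim (P ! i \<inter> X) \<le> dim (P ! m \<inter> X) + (m - i)"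
    "dim (P ! i \<inter> Y) \<le> dim (P ! 0 \<inter> Y) + i" "dim (P ! m \<inter> Y) \<le> dim (P ! i \<inter> Y) + (m - i)"
    using walk_dim_Int_change[OF w sX, of 0 i] walk_dim_Int_change[OF w sX, of i m]
      walk_dim_Int_change[OF w sY, of 0 i] walk_dim_Int_change[OF w sY, of i m] i len by auto
  then show A: "dim (P ! i \<inter> X) + i = k" and C: "dim (P ! i \<inter> Y) + (m - i) = k"
    using ends dX m i by (simp_all add: Int_commute)
  let ?A = "P ! i \<inter> X" and ?C = "P ! i \<inter> Y"
  have sA: "subspace ?A" "subspace ?C" using sP sX sY by (auto simp: subspace_inter)
  have g: "dim (span (?A \<union> ?C)) + dim (?A \<inter> ?C) = dim ?A + dim ?C" by (rule dim_span_Un_Int[OF sA])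
  have sub_P: "span (?A \<union> ?C) \<subseteq> P ! i" using sP by (intro span_minimal) auto
  then have "dim (span (?A \<union> ?C)) \<le> dim (P ! i)" by (rule fd.dim_subset)
  moreover have AC: "?A \<inter> ?C \<subseteq> X \<inter> Y" by auto
  then have "dim (?A \<inter> ?C) \<le> dim (X \<inter> Y)" by (rule fd.dim_subset)
  ultimately have dims: "dim (X \<inter> Y) \<le> dim (?A \<inter> ?C)" "dim (P ! i) \<le> dim (span (?A \<union> ?C))"
    using g A C m i dX by linarith+
  have "?A \<inter> ?C = X \<inter> Y"
    by (rule fd.subspace_dim_equal[OF _ _ AC dims(1)]) (use sA sX sY in \<open>auto intro: subspace_inter\<close>)
  then show "X \<inter> Y \<subseteq> P ! i" by auto
  show "P ! i = span (?A \<union> ?C)"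
    by (rule sym, rule fd.subspace_dim_equal[OF subspace_span sP sub_P dims(2)])
qed

lemma tight_walk_mono:
  assumes w: "walk P X Y" and len: "length P = Suc m" and m: "m + dim (X \<inter> Y) = k"
    and ij: "i \<le> j" "j \<le> m"
  shows "P ! j \<inter> X \<subseteq> P ! i \<inter> X" and "P ! i \<inter> Y \<subseteq> P ! j \<inter> Y"
proof -
  have "j + dim (X \<inter> P ! j) = k" using tight_walk_parts(2)[OF w len m ij(2)] by (simp add: Int_commute)
  then have "X \<inter> P ! j \<subseteq> take (Suc j) P ! i"
    using tight_walk_parts(1)[OF walk_take[OF w] _ _ ij(1)] ij len by simp
  then show "P ! j \<inter> X \<subseteq> P ! i \<inter> X" using ij by auto
  have mi: "(m - i) + dim (P ! i \<inter> Y) = k" using tight_walk_parts(3)[OF w len m, of i] ij by linarith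
  have "walk (drop i P) (P ! i) Y" "length (drop i P) = Suc (m - i)" using walk_drop[OF w] ij len by auto
  then have "P ! i \<inter> Y \<subseteq> drop i P ! (j - i)" using ij by (intro tight_walk_parts(1)[OF _ _ mi]) auto
  then show "P ! i \<inter> Y \<subseteq> P ! j \<inter> Y" using ij len by auto
qed

lemma tight_walk_parts_orth:
  assumes w: "walk P X Y" and len: "length P = Suc m" and m: "m + dim (X \<inter> Y) = k"
    and ab: "a \<le> m" "b \<le> Suc a" "b \<le> m" and u: "u \<in> P ! a \<inter> X" and v: "v \<in> P ! b \<inter> Y"
  shows "B u v = 0"
proof (cases "a = m")
  case True
  then have "u \<in> Y" using u walk_last[OF w] len by auto
  then show ?thesis using v sing_subset_perp[OF vert_sing] walk_vert_ends[OF w] by (auto simp: perp_def)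
next
  case False
  then have "v \<in> P ! Suc a" using tight_walk_mono(2)[OF w len m ab(2)] v ab by auto
  moreover have "adj (P ! a) (P ! Suc a)" using walk_adj[OF w] False ab len by simp
  ultimately show ?thesis using u by (auto simp: adj_iff perp_def)
qed

lemma tight_walk_vertex_span:
  assumes P: "walk P X Y" and len: "length P = Suc m" and m: "m + dim (X \<inter> Y) = k" and i: "i \<le> m"
    and S: "span (S \<union> (X \<inter> Y)) = P ! i \<inter> X" and T: "span (T \<union> (X \<inter> Y)) = P ! i \<inter> Y"
    and W: "span W = X \<inter> Y"
  shows "P ! i = span (S \<union> T \<union> W)"
  using tight_walk_parts(4)[OF P len m i] span_Un_span_Un[OF W, of S T] S T by simp

lemma tight_walk_flag_bases:
  assumes w: "walk P X Y" and len: "length P = Suc m" and m: "m + dim (X \<inter> Y) = k"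
  shows "\<exists>v. \<forall>j\<le>m. span (v ` {1..j} \<union> (X \<inter> Y)) = P ! (m - j) \<inter> X"
    and "\<exists>u. \<forall>j\<le>m. span (u ` {1..j} \<union> (X \<inter> Y)) = P ! j \<inter> Y"
proof -
  have sX: "subspace X" and sY: "subspace Y" using walk_vert_ends[OF w] vert_subspace by auto
  have sP: "subspace (P ! i)" if "i \<le> m" for i using walk_vert[OF w] len that vert_subspace by simp
  have ends: "P ! m \<inter> X = X \<inter> Y" "P ! 0 \<inter> Y = X \<inter> Y"
    using walk_first[OF w] walk_last[OF w] len by auto
  have "\<exists>v. \<forall>j\<le>m. span (v ` {1..j} \<union> (P ! (m - 0) \<inter> X)) = P ! (m - j) \<inter> X"
  proof (rule exists_flag_basis)
    show "subspace (P ! (m - j) \<inter> X)" if "j \<le> m" for j using sP sX by (simp add: subspace_inter)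
    show "P ! (m - j) \<inter> X \<subseteq> P ! (m - Suc j) \<inter> X" if "j < m" for j
      using tight_walk_mono(1)[OF w len m, of "m - Suc j" "m - j"] that by simp
    show "dim (P ! (m - j) \<inter> X) = dim (P ! (m - 0) \<inter> X) + j" if "j \<le> m" for j
      using tight_walk_parts(2)[OF w len m, of "m - j"] tight_walk_parts(2)[OF w len m, of m] that
      by simp
  qed
  then show "\<exists>v. \<forall>j\<le>m. span (v ` {1..j} \<union> (X \<inter> Y)) = P ! (m - j) \<inter> X" using ends by simp
  have "\<exists>u. \<forall>j\<le>m. span (u ` {1..j} \<union> (P ! 0 \<inter> Y)) = P ! j \<inter> Y"
  proof (rule exists_flag_basis)
    show "subspace (P ! j \<inter> Y)" if "j \<le> m" for j using sP sY that by (simp add: subspace_inter)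
    show "P ! j \<inter> Y \<subseteq> P ! Suc j \<inter> Y" if "j < m" for j
      using tight_walk_mono(2)[OF w len m, of j "Suc j"] that by simp
    show "dim (P ! j \<inter> Y) = dim (P ! 0 \<inter> Y) + j" if "j \<le> m" for j
      using tight_walk_parts(3)[OF w len m, of j] tight_walk_parts(3)[OF w len m, of 0] that
      by simp
  qed
  then show "\<exists>u. \<forall>j\<le>m. span (u ` {1..j} \<union> (X \<inter> Y)) = P ! j \<inter> Y" using ends by simp
qed

lemma tight_walk_normal_form:
  assumes w: "walk P X Y" and len: "length P = Suc m" and m: "m + dim (X \<inter> Y) = k"
  shows "\<exists>x y. lower_tri_rebase xv x m \<and> partial_permutation_matrix (gram x y) m m \<and>
    (\<forall>j. 1 \<le> j \<longrightarrow> j \<le> Suc m \<longrightarrow> span (y ` {j..m} \<union> (X \<inter> Y)) = P ! (Suc m - j) \<inter> Y)"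
proof -
  obtain u where u: "\<forall>j\<le>m. span (u ` {1..j} \<union> (X \<inter> Y)) = P ! j \<inter> Y"
    using tight_walk_flag_bases(2)[OF w len m] by blast
  define yv where "yv j = u (Suc m - j)" for j
  obtain x y where lt: "lower_tri_rebase xv x m" and ut: "upper_tri_rebase yv y m"
    and M: "partial_permutation_matrix (gram x y) m m"
    using exists_tri_rebase_partial_permutation by blast
  have "span (y ` {j..m} \<union> (X \<inter> Y)) = P ! (Suc m - j) \<inter> Y" if "1 \<le> j" "j \<le> Suc m" for j
  proof -
    have "span (y ` {j..m} \<union> (X \<inter> Y)) = span (yv ` {j..m} \<union> (X \<inter> Y))"
      by (rule upper_tri_rebase_span[OF ut that])
    also have "yv ` {j..m} = u ` {1..Suc m - j}"
      unfolding yv_def by (rule image_reverse_atLeastAtMost[OF that(1)])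
    finally show ?thesis using u that by simp
  qed
  then show ?thesis using lt M by blast
qed

lemma geodesic_structure_not_opposite:
  assumes X: "vert X" and Y: "vert Y" and XY: "X \<noteq> Y" and no: "\<not> opposite B X Y"
    and geo: "pg_geodesic t scale B Q k P X Y" and m: "m = k - dim (X \<inter> Y)"
  shows "\<exists>w x y :: nat \<Rightarrow> 'v.
             inj_on w {1..k - m} \<and> \<not> dependent (w ` {1..k - m}) \<and>
             span (w ` {1..k - m}) = X \<inter> Y \<and>
             X = span (x ` {1..m} \<union> w ` {1..k - m}) \<and>
             Y = span (y ` {1..m} \<union> w ` {1..k - m}) \<and>
             (\<forall>i\<le>m. P ! i = span
                  (x ` {1..m - i} \<union> y ` {m - i + 1..m} \<union> w ` {1..k - m})) \<and>
             (\<forall>i j. 1 \<le> i \<and> i \<le> j \<and> j \<le> m \<longrightarrow> B (x i) (y j) = 0) \<and>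
             (\<forall>i\<in>{2..m}. (\<forall>j\<in>{1..<i}. B (x i) (y j) = 0) \<or>
                (\<exists>!i'. i' \<in> {1..<i} \<and> B (x i) (y i') = 1 \<and>
                   (\<forall>j\<in>{1..<i}. j \<noteq> i' \<longrightarrow> B (x i) (y j) = 0))) \<and>
             (\<forall>i1 i2 i1' i2'. i1 \<in> {2..m} \<and> i2 \<in> {2..m} \<and> i1 \<noteq> i2 \<and>
                i1' \<in> {1..<i1} \<and> B (x i1) (y i1') = 1 \<and>
                (\<forall>j\<in>{1..<i1}. j \<noteq> i1' \<longrightarrow> B (x i1) (y j) = 0) \<and>
                i2' \<in> {1..<i2} \<and> B (x i2) (y i2') = 1 \<and>
                (\<forall>j\<in>{1..<i2}. j \<noteq> i2' \<longrightarrow> B (x i2) (y j) = 0) \<longrightarrow> i1' \<noteq> i2')"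
proof -
  let ?W = "X \<inter> Y"
  have P: "walk P X Y" and len: "length P = Suc m"
    using geo gdist_not_opposite[OF X Y XY no] m by (auto simp: pg_geodesic_def)
  have "dim ?W < k" by (rule dim_Int_less_k[OF X Y XY])
  then have mW: "m + dim ?W = k" and km: "k - m = dim ?W" using m by auto
  have ends: "P ! 0 = X" "P ! m = Y" using walk_first[OF P] walk_last[OF P] len by auto
  obtain xv where xv: "\<forall>j\<le>m. span (xv ` {1..j} \<union> ?W) = P ! (m - j) \<inter> X"
    using tight_walk_flag_bases(1)[OF P len mW] by blast
  obtain x y where lt: "lower_tri_rebase xv x m" and M: "partial_permutation_matrix (gram x y) m m"
    and hy: "\<And>j. 1 \<le> j \<Longrightarrow> j \<le> Suc m \<Longrightarrow> span (y ` {j..m} \<union> ?W) = P ! (Suc m - j) \<inter> Y"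
    using tight_walk_normal_form[OF P len mW] by blast
  have hx: "span (x ` {1..j} \<union> ?W) = P ! (m - j) \<inter> X" if "j \<le> m" for j
    using lower_tri_rebase_span[OF lt that] xv that by simp
  obtain w where w: "inj_on w {1..dim ?W}" "\<not> dependent (w ` {1..dim ?W})" "span (w ` {1..dim ?W}) = ?W"
    using exists_enumerated_basis X Y by (meson subspace_inter vert_subspace)
  have upper_0: "B (x i) (y j) = 0" if "1 \<le> i" "i \<le> j" "j \<le> m" for i j
  proof (rule tight_walk_parts_orth[OF P len mW])
    show "x i \<in> P ! (m - i) \<inter> X" using hx[of i] span_base[of "x i" "x ` {1..i} \<union> ?W"] that by auto
    show "y j \<in> P ! (Suc m - j) \<inter> Y" using hy[of j] span_base[of "y j" "y ` {j..m} \<union> ?W"] that by auto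
  qed (use that in auto)
  then have upper: "\<forall>i j. 1 \<le> i \<and> i \<le> j \<and> j \<le> m \<longrightarrow> B (x i) (y j) = 0" by blast
  have wW: "span (w ` {1..k - m}) = ?W" using w(3) km by simp
  have path: "\<forall>i\<le>m. P ! i = span (x ` {1..m - i} \<union> y ` {m - i + 1..m} \<union> w ` {1..k - m})"
  proof (intro allI impI)
    fix i assume i: "i \<le> m"
    show "P ! i = span (x ` {1..m - i} \<union> y ` {m - i + 1..m} \<union> w ` {1..k - m})"
      by (rule tight_walk_vertex_span[OF P len mW i _ _ wW]) (use hx[of "m - i"] hy[of "m - i + 1"] i in simp_all)
  qed
  have "X = span (x ` {1..m} \<union> ?W)" using hx[of m] ends by simp
  also have "\<dots> = span (x ` {1..m} \<union> w ` {1..k - m})" using span_Un_span[of "x ` {1..m}" "w ` {1..k - m}"] wW by simp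
  finally have X_eq: "X = span (x ` {1..m} \<union> w ` {1..k - m})" .
  have "Y = span (y ` {1..m} \<union> ?W)" using hy[of 1] ends by simp
  also have "\<dots> = span (y ` {1..m} \<union> w ` {1..k - m})" using span_Un_span[of "y ` {1..m}" "w ` {1..k - m}"] wW by simp
  finally have Y_eq: "Y = span (y ` {1..m} \<union> w ` {1..k - m})" .
  show ?thesis
  proof (rule exI[of _ w], rule exI[of _ x], rule exI[of _ y], intro conjI)
    show "inj_on w {1..k - m}" "\<not> dependent (w ` {1..k - m})" using w km by simp_all
  qed (fact wW X_eq Y_eq path upper partial_permutation_matrix_lower_rows[OF M upper]
      partial_permutation_matrix_distinct_pivots[OF M])+
qed

lemma opposite_geodesic_first_step:
  assumes opp: "opposite B X Y" and P: "walk P X Y" and len: "length P = Suc (Suc m)"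
    and m: "m + dim (X \<inter> Y) = k"
  shows "adj X (P ! 1)" and "P ! 1 \<inter> Y = X \<inter> Y"
    and "walk (drop 1 P) (P ! 1) Y" and "length (drop 1 P) = Suc m"
proof -
  show adj: "adj X (P ! 1)" using walk_adj[OF P, of 0] walk_first[OF P] len by simp
  show Q: "walk (drop 1 P) (P ! 1) Y" and "length (drop 1 P) = Suc m"
    using walk_drop[OF P, of 1] len by auto
  have "k \<le> dim (P ! 1 \<inter> Y) + m" using walk_length_ge[OF Q] len by simp
  moreover have sub: "P ! 1 \<inter> Y \<subseteq> X \<inter> Y" by (rule opposite_adj_Int_subset[OF opp adj])
  moreover have "subspace (P ! 1 \<inter> Y)" "subspace (X \<inter> Y)"
    using walk_vert_ends[OF P] walk_vert_ends[OF Q] by (auto intro: subspace_inter simp: vert_subspace)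
  ultimately show "P ! 1 \<inter> Y = X \<inter> Y" using m fd.subspace_dim_equal by (metis add_le_cancel_left add.commute)
qed

lemma opposite_orth_dim_le:
  assumes X: "vert X" and Y: "vert Y" and opp: "opposite B X Y"
    and U: "subspace U" "U \<subseteq> X" and V: "subspace V" "V \<subseteq> Y" and UV: "U \<subseteq> perp B V"
  shows "dim U + dim V \<le> k + dim (X \<inter> Y)"
proof -
  have "dim V + dim (X \<inter> perp B V) = dim X + dim (V \<inter> perp B X)"
    by (rule dim_perp_rank[OF vert_subspace[OF X] V(1)])
  moreover have "V \<inter> perp B X \<subseteq> X \<inter> Y" using V(2) opp unfolding opposite_def by auto
  then have "dim (V \<inter> perp B X) \<le> dim (X \<inter> Y)" by (rule fd.dim_subset)
  moreover have "U \<subseteq> X \<inter> perp B V" using U UV by auto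
  then have "dim U \<le> dim (X \<inter> perp B V)" by (rule fd.dim_subset)
  ultimately show ?thesis using X by (simp add: vert_dim)
qed

lemma opposite_exists_not_orth:
  assumes X: "vert X" and Y: "vert Y" and opp: "opposite B X Y"
    and S: "span (S \<union> (X \<inter> Y)) \<subseteq> X" and T: "span (T \<union> (X \<inter> Y)) \<subseteq> Y"
    and dim: "k + dim (X \<inter> Y) < dim (span (S \<union> (X \<inter> Y))) + dim (span (T \<union> (X \<inter> Y)))"
  shows "\<exists>g\<in>S. \<exists>h\<in>T. B g h \<noteq> 0"
proof (rule ccontr)
  assume orth: "\<not> ?thesis"
  have "span (S \<union> (X \<inter> Y)) \<subseteq> perp B (span (T \<union> (X \<inter> Y)))"
  proof (rule span_subset_perp_span)
    fix g h assume g: "g \<in> S \<union> (X \<inter> Y)" and h: "h \<in> T \<union> (X \<inter> Y)"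
    have "g \<in> X" using g S span_superset[of "S \<union> (X \<inter> Y)"] by blast
    moreover have "h \<in> Y" using h T span_superset[of "T \<union> (X \<inter> Y)"] by blast
    moreover have "X \<subseteq> perp B X" "Y \<subseteq> perp B Y"
      using sing_subset_perp vert_sing X Y by blast+
    ultimately show "B g h = 0" using g h orth unfolding perp_def by blast
  qed
  then show False using opposite_orth_dim_le[OF X Y opp _ S _ T] dim by simp
qed

lemma opposite_gram_diagonal:
  assumes X: "vert X" and Y: "vert Y" and opp: "opposite B X Y"
    and x: "\<And>j. j \<le> m \<Longrightarrow> span (x ` {1..j} \<union> (X \<inter> Y)) \<subseteq> X \<and>
      dim (span (x ` {1..j} \<union> (X \<inter> Y))) = dim (X \<inter> Y) + j"
    and y: "\<And>j. 1 \<le> j \<Longrightarrow> j \<le> m \<Longrightarrow> span (y ` {j..m} \<union> (X \<inter> Y)) \<subseteq> Y \<and>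
      dim (span (y ` {j..m} \<union> (X \<inter> Y))) + j = k + 1"
    and upper: "\<And>i j. 1 \<le> i \<Longrightarrow> i < j \<Longrightarrow> j \<le> m \<Longrightarrow> B (x i) (y j) = 0"
    and i: "i \<in> {1..m}"
  shows "B (x i) (y i) \<noteq> 0"
proof -
  have xi: "span (x ` {1..i} \<union> (X \<inter> Y)) \<subseteq> X" "dim (span (x ` {1..i} \<union> (X \<inter> Y))) = dim (X \<inter> Y) + i"
    using x[of i] i by auto
  have yi: "span (y ` {i..m} \<union> (X \<inter> Y)) \<subseteq> Y" "dim (span (y ` {i..m} \<union> (X \<inter> Y))) + i = k + 1"
    using y[of i] i by auto
  have "\<exists>g\<in>x ` {1..i}. \<exists>h\<in>y ` {i..m}. B g h \<noteq> 0"
    by (rule opposite_exists_not_orth[OF X Y opp xi(1) yi(1)]) (use xi(2) yi(2) in linarith)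
  then obtain a j where a: "a \<in> {1..i}" and j: "j \<in> {i..m}" and nz: "B (x a) (y j) \<noteq> 0"
    by blast
  have "\<not> a < j"
  proof
    assume "a < j"
    then show False using upper[of a j] a j nz by simp
  qed
  then have "a = i" "j = i" using a j by auto
  then show ?thesis using nz by simp
qed

context
  fixes X Y X0 P m
  assumes X: "vert X" and Y: "vert Y" and opp: "opposite B X Y" and adj: "adj X X0"
    and P: "walk P X0 Y" and len: "length P = Suc m" and m: "m + dim (X \<inter> Y) = k"
    and X0Y: "X0 \<inter> Y = X \<inter> Y"
begin

lemma opposite_tight_walk_exists_outside:
  assumes "1 \<le> m"
  shows "\<exists>x0. x0 \<in> P ! (m - 1) \<inter> X0 \<and> x0 \<notin> X"
proof (rule ccontr)
  assume "\<not> ?thesis"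
  then have inX: "P ! (m - 1) \<inter> X0 \<subseteq> X" by blast
  have mX0: "m + dim (X0 \<inter> Y) = k" using m X0Y by simp
  \<comment> \<open>\<open>P ! (m - 1)\<close> is adjacent to \<open>Y\<close>, so a part of it inside \<open>X\<close> lies in \<open>X \<inter> Y\<^sup>\<perp> = X \<inter> Y\<close>\<close>
  have "adj (P ! (m - 1)) Y" using walk_adj[OF P, of "m - 1"] walk_last[OF P] len assms by simp
  then have "Y \<subseteq> perp B (P ! (m - 1))" by (simp add: adj_iff)
  then have "P ! (m - 1) \<subseteq> perp B Y" using B_eq_0_commute unfolding perp_def by blast
  then have "P ! (m - 1) \<inter> X0 \<subseteq> X \<inter> perp B Y" using inX by blast
  then have "P ! (m - 1) \<inter> X0 \<subseteq> X \<inter> Y" using opposite_Int_perp[OF X Y opp] by simp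
  then have "dim (P ! (m - 1) \<inter> X0) \<le> dim (X \<inter> Y)" by (rule fd.dim_subset)
  then show False using tight_walk_parts(2)[OF P len mX0, of "m - 1"] m assms by simp
qed

lemma opposite_tight_walk_part_X:
  assumes x0: "x0 \<in> P ! (m - 1) \<inter> X0" "x0 \<notin> X" and j: "j < m"
  shows "dim (P ! j \<inter> X0 \<inter> X) + 1 = dim (P ! j \<inter> X0)"
    and "span (insert x0 (P ! j \<inter> X0 \<inter> X)) = P ! j \<inter> X0"
proof -
  have mX0: "m + dim (X0 \<inter> Y) = k" using m X0Y by simp
  have X0: "vert X0" using adj_vert[OF adj] by simp
  have "vert (P ! j)" using walk_vert[OF P, of j] len j by simp
  then have S: "subspace (P ! j \<inter> X0)" "P ! j \<inter> X0 \<subseteq> X0"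
    using X0 by (simp_all add: subspace_inter vert_subspace)
  have H: "subspace (X \<inter> X0)" "X \<inter> X0 \<subseteq> X0" "dim (X \<inter> X0) + 1 = dim X0"
    using adj X X0 by (simp_all add: subspace_inter vert_subspace vert_dim adj_iff)
  have "j \<le> m - 1" using j by simp
  then have "x0 \<in> P ! j \<inter> X0" using tight_walk_mono(1)[OF P len mX0, of j "m - 1"] x0(1) by auto
  moreover have "P ! j \<inter> X0 \<inter> (X \<inter> X0) = P ! j \<inter> X0 \<inter> X" by auto
  ultimately show "dim (P ! j \<inter> X0 \<inter> X) + 1 = dim (P ! j \<inter> X0)"
    and "span (insert x0 (P ! j \<inter> X0 \<inter> X)) = P ! j \<inter> X0"
    using hyperplane_Int[OF vert_subspace[OF X0] S H, of x0] x0(2) by auto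
qed

lemma opposite_tight_walk_X_flag:
  assumes "1 \<le> m"
  shows "\<exists>x0 r. x0 \<notin> X \<and> span (r ` {1..m} \<union> (X \<inter> Y)) = X \<and>
    (\<forall>j\<le>m. span (r ` {1..j} \<union> (X \<inter> Y)) \<subseteq> X \<and>
            dim (span (r ` {1..j} \<union> (X \<inter> Y))) = dim (X \<inter> Y) + j) \<and>
    (\<forall>j. 1 \<le> j \<longrightarrow> j \<le> m \<longrightarrow> span (insert x0 (r ` {1..j - 1} \<union> (X \<inter> Y))) = P ! (m - j) \<inter> X0)"
proof -
  let ?W = "X \<inter> Y"
  have mX0: "m + dim (X0 \<inter> Y) = k" using m X0Y by simp
  obtain x0 where x0: "x0 \<in> P ! (m - 1) \<inter> X0" "x0 \<notin> X"
    using opposite_tight_walk_exists_outside[OF assms] by blast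
  note part_X = opposite_tight_walk_part_X[OF x0]
  \<comment> \<open>the parts inside \<open>X\<close> of \<open>P ! (m - 1) \<inter> X0, \<dots>, P ! 0 \<inter> X0\<close>, followed by \<open>X\<close>, form a full flag\<close>
  define G where "G i = (if i < m then P ! (m - 1 - i) \<inter> X0 \<inter> X else X)" for i
  have sG: "subspace (G i)" if "i \<le> m" for i
    using walk_vert[OF P, of "m - 1 - i"] len X adj_vert[OF adj] unfolding G_def
    by (auto intro!: subspace_inter simp: vert_subspace)
  have dG: "dim (G i) = dim ?W + i" if "i \<le> m" for i
  proof (cases "i < m")
    case True
    then show ?thesis
      using part_X(1)[of "m - 1 - i"] tight_walk_parts(2)[OF P len mX0, of "m - 1 - i"] m
      unfolding G_def by simp
  next
    case False
    then show ?thesis using that m X unfolding G_def by (simp add: vert_dim)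
  qed
  have G0: "G 0 = ?W"
  proof (rule sym, rule fd.subspace_dim_equal)
    show "subspace ?W" using X Y by (simp add: subspace_inter vert_subspace)
    show "subspace (G 0)" using sG by simp
    show "?W \<subseteq> G 0"
      using tight_walk_parts(1)[OF P len mX0, of "m - 1"] X0Y assms unfolding G_def by auto
    show "dim (G 0) \<le> dim ?W" using dG[of 0] by simp
  qed
  obtain r where r: "\<forall>j\<le>m. span (r ` {1..j} \<union> G 0) = G j"
  proof -
    have "\<exists>r. \<forall>j\<le>m. span (r ` {1..j} \<union> G 0) = G j"
    proof (rule exists_flag_basis[OF sG])
      show "G j \<subseteq> G (Suc j)" if "j < m" for j
      proof -
        have "m - 1 - Suc j \<le> m - 1 - j" by simp
        then show ?thesis
          using tight_walk_mono(1)[OF P len mX0, of "m - 1 - Suc j" "m - 1 - j"] that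
          unfolding G_def by auto
      qed
      show "dim (G j) = dim (G 0) + j" if "j \<le> m" for j using dG[OF that] dG[of 0] by simp
    qed
    then show ?thesis using that by blast
  qed
  have A_eq: "span (insert x0 (r ` {1..j - 1} \<union> ?W)) = P ! (m - j) \<inter> X0" if "1 \<le> j" "j \<le> m" for j
  proof -
    have j: "j - 1 < m" "m - 1 - (j - 1) = m - j" using that by auto
    then have "span (r ` {1..j - 1} \<union> ?W) = P ! (m - j) \<inter> X0 \<inter> X"
      using r[rule_format, of "j - 1"] G0 unfolding G_def by simp
    moreover have "subspace (P ! (m - j) \<inter> X0 \<inter> X)" using sG[of "j - 1"] j unfolding G_def by simp
    ultimately have "span (insert x0 (r ` {1..j - 1} \<union> ?W)) = span (insert x0 (P ! (m - j) \<inter> X0 \<inter> X))"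
      by (intro span_insert_cong) (metis span_eq_iff)
    then show ?thesis using part_X(2)[of "m - j"] that by simp
  qed
  have rG: "span (r ` {1..j} \<union> ?W) = G j" if "j \<le> m" for j using r G0 that by simp
  have "G j \<subseteq> X" for j unfolding G_def by auto
  then show ?thesis
    using x0(2) dG rG A_eq rG[of m] unfolding G_def by (intro exI[of _ x0] exI[of _ r]) auto
qed

end

lemma geodesic_structure_opposite:
  assumes X: "vert X" and Y: "vert Y" and opp: "opposite B X Y"
    and geo: "pg_geodesic t scale B Q k P X Y" and m: "m = k - dim (X \<inter> Y)"
  shows "\<exists>w x y :: nat \<Rightarrow> 'v.
             inj_on w {1..k - m} \<and> \<not> dependent (w ` {1..k - m}) \<and>
             span (w ` {1..k - m}) = X \<inter> Y \<and>
             X = span (x ` {1..m} \<union> w ` {1..k - m}) \<and>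
             Y = span (y ` {1..m} \<union> w ` {1..k - m}) \<and>
             P ! 0 = X \<and>
             (\<forall>i\<le>m. P ! Suc i = span
                  (x ` {0..<m - i} \<union> y ` {m - i + 1..m} \<union> w ` {1..k - m})) \<and>
             (\<forall>i j. i < j \<and> j \<le> m \<longrightarrow> B (x i) (y j) = 0) \<and>
             (\<forall>i\<in>{1..m}. B (x i) (y i) = 1) \<and>
             (\<forall>i j. 1 \<le> j \<and> j < i \<and> i \<le> m \<longrightarrow> B (x i) (y j) = 0)"
proof -
  let ?W = "X \<inter> Y"
  have P: "walk P X Y" and len: "length P = Suc (Suc m)"
    using geo gdist_opposite[OF X Y opp] m by (auto simp: pg_geodesic_def)
  have "X \<noteq> Y" using opp unfolding opposite_def by simp
  then have "dim ?W < k" by (rule dim_Int_less_k[OF X Y])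
  then have mW: "m + dim ?W = k" and km: "k - m = dim ?W" and m1: "1 \<le> m" using m by auto
  define X0 Q where "X0 = P ! 1" and "Q = drop 1 P"
  have adj: "adj X X0" and X0Y: "X0 \<inter> Y = ?W" and Q: "walk Q X0 Y" and lenQ: "length Q = Suc m"
    using opposite_geodesic_first_step[OF opp P len mW] unfolding X0_def Q_def by auto
  have mX0: "m + dim (X0 \<inter> Y) = k" using mW X0Y by simp
  obtain x0 r where x0: "x0 \<notin> X" and rX: "span (r ` {1..m} \<union> ?W) = X"
    and r_flag: "\<forall>j\<le>m. span (r ` {1..j} \<union> ?W) \<subseteq> X \<and> dim (span (r ` {1..j} \<union> ?W)) = dim ?W + j"
    and A_eq: "\<forall>j. 1 \<le> j \<longrightarrow> j \<le> m \<longrightarrow> span (insert x0 (r ` {1..j - 1} \<union> ?W)) = Q ! (m - j) \<inter> X0"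
    using opposite_tight_walk_X_flag[OF X Y opp adj Q lenQ mW X0Y m1] by blast
  obtain x' y where lt: "lower_tri_rebase r x' m" and M: "partial_permutation_matrix (gram x' y) m m"
    and hy: "\<And>j. 1 \<le> j \<Longrightarrow> j \<le> Suc m \<Longrightarrow> span (y ` {j..m} \<union> ?W) = Q ! (Suc m - j) \<inter> Y"
    using tight_walk_normal_form[OF Q lenQ mX0, of r, unfolded X0Y] by blast
  define x where "x i = (if i = 0 then x0 else x' i)" for i
  have x_x': "x ` {1..j} = x' ` {1..j}" for j unfolding x_def by auto
  have x'_span: "span (x' ` {1..j} \<union> ?W) = span (r ` {1..j} \<union> ?W)" if "j \<le> m" for j
    by (rule lower_tri_rebase_span[OF lt that])
  then have x_span: "span (x ` {1..j} \<union> ?W) = span (r ` {1..j} \<union> ?W)" if "j \<le> m" for j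
    using that unfolding x_x' .
  have hx: "span (x ` {0..<j} \<union> ?W) = Q ! (m - j) \<inter> X0" if "j \<le> m" for j
  proof (cases "j = 0")
    case True
    have "Q ! m = Y" using walk_last[OF Q] lenQ by simp
    then show ?thesis using True X0Y X Y by (simp add: Int_commute subspace_inter vert_subspace)
  next
    case False
    then have "{0..<j} = insert 0 {1..j - 1}" by auto
    moreover have "x 0 = x0" by (simp add: x_def)
    ultimately have "span (x ` {0..<j} \<union> ?W) = span (insert x0 (x ` {1..j - 1} \<union> ?W))" by simp
    also have "\<dots> = span (insert x0 (r ` {1..j - 1} \<union> ?W))"
      by (rule span_insert_cong[OF x_span]) (use that in simp)
    also have "\<dots> = Q ! (m - j) \<inter> X0" using A_eq False that by simp
    finally show ?thesis .
  qed
  have x_in: "x i \<in> Q ! (m - Suc i) \<inter> X0" if "i < m" for i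
    using hx[of "Suc i"] span_base[of "x i" "x ` {0..<Suc i} \<union> ?W"] that by auto
  have y_in: "y j \<in> Q ! (Suc m - j) \<inter> Y" if "1 \<le> j" "j \<le> m" for j
    using hy[of j] span_base[of "y j" "y ` {j..m} \<union> ?W"] that by auto
  have upper: "\<forall>i j. i < j \<and> j \<le> m \<longrightarrow> B (x i) (y j) = 0"
  proof (intro allI impI)
    fix i j assume ij: "i < j \<and> j \<le> m"
    then have "m - Suc i \<le> m" "Suc m - j \<le> Suc (m - Suc i)" "Suc m - j \<le> m" by auto
    then show "B (x i) (y j) = 0" using tight_walk_parts_orth[OF Q lenQ mX0 _ _ _ x_in y_in] ij by simp
  qed
  have diag: "B (x' i) (y i) \<noteq> 0" if i: "i \<in> {1..m}" for i
  proof (rule opposite_gram_diagonal[OF X Y opp _ _ _ i])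
    show "span (x' ` {1..j} \<union> ?W) \<subseteq> X \<and> dim (span (x' ` {1..j} \<union> ?W)) = dim ?W + j"
      if "j \<le> m" for j
      unfolding x'_span[OF that] using r_flag that by blast
    show "span (y ` {j..m} \<union> ?W) \<subseteq> Y \<and> dim (span (y ` {j..m} \<union> ?W)) + j = k + 1"
      if "1 \<le> j" "j \<le> m" for j
    proof -
      have "Suc m - j \<le> m" using that by auto
      then have "dim (Q ! (Suc m - j) \<inter> Y) + (m - (Suc m - j)) = k"
        by (rule tight_walk_parts(3)[OF Q lenQ mX0])
      then show ?thesis using hy[OF that(1)] that by auto
    qed
    show "B (x' a) (y j) = 0" if "1 \<le> a" "a < j" "j \<le> m" for a j
    proof -
      have "B (x a) (y j) = 0" using upper that by blast
      then show ?thesis using that unfolding x_def by simp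
    qed
  qed
  obtain w where w: "inj_on w {1..dim ?W}" "\<not> dependent (w ` {1..dim ?W})" "span (w ` {1..dim ?W}) = ?W"
    using exists_enumerated_basis X Y by (meson subspace_inter vert_subspace)
  have wW: "span (w ` {1..k - m}) = ?W" using w(3) km by simp
  have path: "\<forall>i\<le>m. P ! Suc i = span (x ` {0..<m - i} \<union> y ` {m - i + 1..m} \<union> w ` {1..k - m})"
  proof (intro allI impI)
    fix i assume i: "i \<le> m"
    have "P ! Suc i = Q ! i" using len i unfolding Q_def by simp
    also have "\<dots> = span (x ` {0..<m - i} \<union> y ` {m - i + 1..m} \<union> w ` {1..k - m})"
      by (rule tight_walk_vertex_span[OF Q lenQ mX0 i _ _ wW[folded X0Y], unfolded X0Y])
        (use hx[of "m - i"] hy[of "m - i + 1"] i in simp_all)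
    finally show "P ! Suc i = span (x ` {0..<m - i} \<union> y ` {m - i + 1..m} \<union> w ` {1..k - m})" .
  qed
  have "X = span (x ` {1..m} \<union> ?W)" using x_span[of m] rX by simp
  also have "\<dots> = span (x ` {1..m} \<union> w ` {1..k - m})" using span_Un_span[of "x ` {1..m}" "w ` {1..k - m}"] wW by simp
  finally have X_eq: "X = span (x ` {1..m} \<union> w ` {1..k - m})" .
  have "Y = span (y ` {1..m} \<union> ?W)" using hy[of 1] walk_last[OF Q] lenQ by simp
  also have "\<dots> = span (y ` {1..m} \<union> w ` {1..k - m})" using span_Un_span[of "y ` {1..m}" "w ` {1..k - m}"] wW by simp
  finally have Y_eq: "Y = span (y ` {1..m} \<union> w ` {1..k - m})" .
  have ident: "B (x i) (y i) = 1" "\<And>j. j \<in> {1..m} \<Longrightarrow> j \<noteq> i \<Longrightarrow> B (x i) (y j) = 0" if "i \<in> {1..m}" for i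
    using partial_permutation_matrix_diagonal[OF M that] diag[OF that] that unfolding x_def by auto
  show ?thesis
  proof (rule exI[of _ w], rule exI[of _ x], rule exI[of _ y], intro conjI)
    show "inj_on w {1..k - m}" "\<not> dependent (w ` {1..k - m})" using w km by simp_all
    show "P ! 0 = X" by (rule walk_first[OF P])
    show "\<forall>i\<in>{1..m}. B (x i) (y i) = 1" using ident(1) by blast
    show "\<forall>i j. 1 \<le> j \<and> j < i \<and> i \<le> m \<longrightarrow> B (x i) (y j) = 0" using ident(2) by auto
  qed (fact wW X_eq Y_eq path upper)+
qed

subsection \<open>Diameter\<close>

lemma exists_vert: "\<exists>X. vert X"
proof -
  obtain M where M: "sing M" "dim M = \<omega>" using ex_singular_dim_\<omega> by blast
  have "{0} \<subseteq> M" using subspace_0[OF sing_subspace[OF M(1)]] by auto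
  moreover have "dim {0} \<le> k" "k \<le> dim M" using M k_less_\<omega> by auto
  ultimately obtain H where "subspace H" "H \<subseteq> M" "dim H = k"
    using subspace_between[OF subspace_single_0 sing_subspace[OF M(1)]] by blast
  then show ?thesis using sing_subset[OF M(1)] by (auto simp: pg_vertex_def)
qed

lemma exists_perp_not_orth:
  assumes X: "sing X" and x: "x \<in> X" "x \<noteq> 0" and U: "subspace U" "U \<inter> perp B X \<subseteq> {0}"
  shows "\<exists>v\<in>perp B U. B x v \<noteq> 0"
proof (rule ccontr)
  assume "\<not> ?thesis"
  then have "x \<in> perp B (perp B U)" unfolding perp_def using B_eq_0_commute by blast
  then have "x \<in> span (U \<union> perp B UNIV)" using perp_perp[OF U(1)] by simp
  then obtain u r where ur: "x = u + r" "u \<in> span U" "r \<in> span (perp B UNIV)"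
    unfolding span_Un by blast
  have u: "u \<in> U" using ur(2) U(1) by (metis span_eq_iff)
  have "r \<in> perp B UNIV" using ur(3) subspace_perp[of UNIV] by (metis span_eq_iff)
  then have r: "B z r = 0" for z by (simp add: perp_def)
  \<comment> \<open>\<open>u = x - r\<close> is orthogonal to the singular subspace \<open>X\<close>, so it vanishes and \<open>x\<close> lies in the radical\<close>
  have "u \<in> perp B X"
    using sing_subset_perp[OF X] x(1) r ur(1) by (auto simp: perp_def B_add_right)
  then have "u = 0" using U(2) u by auto
  then have "\<forall>z. B z x = 0" using ur(1) r by simp
  then show False using singular_radical_eq_0 sing_singular_vec[OF X x(1)] x(2) by blast
qed

lemma extend_singular_avoiding_perp:
  assumes X: "vert X" and U: "sing U" "U \<inter> perp B X \<subseteq> {0}" "dim U < k"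
  shows "\<exists>U'. sing U' \<and> dim U' = Suc (dim U) \<and> U' \<inter> perp B X \<subseteq> {0}"
proof -
  have sU: "subspace U" using sing_subspace[OF U(1)] .
  have "dim X + dim (U \<inter> perp B X) = dim U + dim (X \<inter> perp B U)"
    by (rule dim_perp_rank[OF sU vert_subspace[OF X]])
  then have "0 < dim (X \<inter> perp B U)" using U(3) vert_dim[OF X] by linarith
  then have "\<not> X \<inter> perp B U \<subseteq> {0}" using fd.dim_eq_0[of "X \<inter> perp B U"] by linarith
  then obtain x where x: "x \<in> X" "x \<in> perp B U" "x \<noteq> 0" by auto
  have x_sv: "singular_vec x" using sing_singular_vec[OF vert_sing[OF X] x(1)] .
  obtain v where v: "v \<in> perp B U" "B x v \<noteq> 0"
    using exists_perp_not_orth[OF vert_sing[OF X] x(1,3) sU U(2)] by blast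
  \<comment> \<open>make \<open>v\<close> singular without destroying \<open>B x v \<noteq> 0\<close>, since \<open>B x x = 0\<close>\<close>
  obtain c where c: "singular_vec (v + scale c x)" using singular_vec_shift[OF x_sv v(2)] by blast
  define y where "y = v + scale c x"
  have y_perp: "y \<in> perp B U"
    unfolding y_def using v(1) x(2) subspace_perp by (simp add: subspace_add subspace_scale)
  have Bxy: "B x y \<noteq> 0"
    unfolding y_def using v(2) singular_vec_B_self[OF x_sv] by (simp add: B_add_right B_scale_right)
  have y_notin: "y \<notin> U"
  proof
    assume "y \<in> U"
    then have "B y x = 0" using x(2) by (simp add: perp_def)
    then show False using Bxy B_eq_0_commute by simp
  qed
  define U' where "U' = span (insert y U)"
  have "sing U'" unfolding U'_def using sing_span_insert[OF U(1) c[folded y_def] y_perp] .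
  moreover have "dim U' = Suc (dim U)" unfolding U'_def using dim_span_insert_notin[OF sU y_notin] by simp
  moreover have "U' \<inter> perp B X \<subseteq> {0}"
  proof
    fix z assume z: "z \<in> U' \<inter> perp B X"
    then obtain d where "z - scale d y \<in> span U" unfolding U'_def using span_breakdown_eq by blast
    then have u: "z - scale d y \<in> U" using sU by (metis span_eq_iff)
    have "B x z = 0" using z x(1) unfolding perp_def by blast
    moreover have "B x (z - scale d y) = 0" using u x(2) B_eq_0_commute unfolding perp_def by blast
    ultimately have "\<sigma> d * B x y = 0" by (simp add: B_diff_right B_scale_right)
    then have "z \<in> U" using Bxy u by simp
    then show "z \<in> {0}" using U(2) z by auto
  qed
  ultimately show ?thesis by blast
qed

lemma exists_opposite_Int_0: "\<exists>U U'. vert U \<and> vert U' \<and> opposite B U U' \<and> dim (U \<inter> U') = 0"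
proof -
  obtain X where X: "vert X" using exists_vert by blast
  have "j \<le> k \<Longrightarrow> \<exists>U. sing U \<and> dim U = j \<and> U \<inter> perp B X \<subseteq> {0}" for j
  proof (induction j)
    case 0
    have "singular_vec 0" using sing_singular_vec[OF vert_sing[OF X] subspace_0[OF vert_subspace[OF X]]] .
    then have "sing {0}" by (simp add: singular_iff)
    then show ?case by (intro exI[of _ "{0}"]) simp
  next
    case (Suc j)
    then obtain U where "sing U" "dim U = j" "U \<inter> perp B X \<subseteq> {0}" by auto
    then show ?case using extend_singular_avoiding_perp[OF X, of U] Suc.prems by auto
  qed
  then obtain Y where Y: "sing Y" "dim Y = k" "Y \<inter> perp B X \<subseteq> {0}" by blast
  then have vY: "vert Y" by (simp add: pg_vertex_def)
  have "0 \<in> X" "0 \<in> Y" "0 \<in> perp B X" using X vY by (simp_all add: vert_subspace subspace_0 perp_def)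
  then have perp_0: "perp B X \<inter> Y = {0}" using Y(3) by auto
  moreover have "X \<inter> Y \<subseteq> perp B X \<inter> Y" using sing_subset_perp[OF vert_sing[OF X]] by auto
  ultimately have XY: "X \<inter> Y = {0}" using \<open>0 \<in> X\<close> \<open>0 \<in> Y\<close> by auto
  moreover have "X \<noteq> Y"
  proof
    assume "X = Y"
    then have "dim X = 0" using XY by simp
    then show False using X k_pos by (simp add: vert_dim)
  qed
  ultimately show ?thesis using X vY perp_0 unfolding opposite_def by (intro exI[of _ X] exI[of _ Y]) simp
qed

lemma gdist_le_Suc_k:
  assumes "vert U" "vert U'"
  shows "(\<exists>P. walk P U U') \<and> gdist U U' \<le> k + 1"
proof (cases "U = U'")
  case True
  then show ?thesis using walk_singleton[OF assms(1)] gdist_le by fastforce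
next
  case False
  show ?thesis
  proof (cases "opposite B U U'")
    case True
    then show ?thesis using walk_if_opposite[OF assms True] gdist_opposite[OF assms True] by auto
  next
    case False
    then show ?thesis
      using walk_if_not_opposite[OF assms \<open>U \<noteq> U'\<close> False] gdist_not_opposite[OF assms \<open>U \<noteq> U'\<close> False]
      by auto
  qed
qed

lemma exists_gdist_Suc_k: "\<exists>U U'. vert U \<and> vert U' \<and> gdist U U' = k + 1"
proof -
  obtain U U' where "vert U" "vert U'" "opposite B U U'" "dim (U \<inter> U') = 0"
    using exists_opposite_Int_0 by blast
  then have "gdist U U' = Suc (k - dim (U \<inter> U'))" using gdist_opposite by blast
  then have "gdist U U' = k + 1" using \<open>dim (U \<inter> U') = 0\<close> by linarith
  then show ?thesis using \<open>vert U\<close> \<open>vert U'\<close> by blast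
qed

end

section \<open>The classical formed spaces\<close>

lemma involutory_automorphism_basics:
  assumes "involutory_automorphism \<sigma>"
  shows "\<sigma> 0 = 0" and "\<sigma> a = 0 \<longleftrightarrow> a = 0" and "\<sigma> 1 = 1"
    and "\<sigma> (- a) = - \<sigma> a" and "\<sigma> (inverse a) = inverse (\<sigma> a)"
proof -
  have add: "\<sigma> (a + b) = \<sigma> a + \<sigma> b" and mult: "\<sigma> (a * b) = \<sigma> a * \<sigma> b" and inv: "\<sigma> (\<sigma> a) = a"
    for a b using assms unfolding involutory_automorphism_def by auto
  show zero: "\<sigma> 0 = 0" using add[of 0 0] by (metis add_0 add_cancel_right_right)
  show zero_iff: "\<sigma> a = 0 \<longleftrightarrow> a = 0" for a by (metis zero inv)
  show one: "\<sigma> 1 = 1"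
  proof -
    have "\<sigma> 1 = \<sigma> 1 * \<sigma> 1" using mult[of 1 1] by simp
    moreover have "\<sigma> 1 \<noteq> 0" using zero_iff[of 1] by simp
    ultimately show ?thesis by (metis mult_cancel_left1)
  qed
  show "\<sigma> (- a) = - \<sigma> a" for a using add[of a "- a"] zero by (simp add: add_eq_0_iff)
  show "\<sigma> (inverse a) = inverse (\<sigma> a)" for a
  proof (cases "a = 0")
    case False
    then have "\<sigma> a * \<sigma> (inverse a) = 1" using mult[of a "inverse a"] one by simp
    then show ?thesis by (rule inverse_unique[symmetric])
  qed (simp add: zero)
qed

lemma involutory_automorphism_trace_nonzero:
  assumes "involutory_automorphism \<sigma>"
  shows "\<exists>t. t + \<sigma> t \<noteq> 0"
proof (rule ccontr)
  assume "\<not> ?thesis"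
  then have trace_0: "t + \<sigma> t = 0" for t by simp
  \<comment> \<open>then \<open>1 + 1 = 0\<close>, so \<open>\<sigma> t = - t = t\<close> for all \<open>t\<close>, contradicting that \<open>\<sigma>\<close> is not the identity\<close>
  have "(1::'a) + 1 = 0" using trace_0[of 1] involutory_automorphism_basics(3)[OF assms] by simp
  then have "t + t = 0" for t :: 'a by (metis distrib_left mult.right_neutral mult_zero_right)
  then have "\<sigma> t = t" for t using trace_0[of t] by (metis add_left_cancel)
  then show False using assms unfolding involutory_automorphism_def by blast
qed

lemma (in vector_space) hermitian_isotropic_shift:
  assumes \<sigma>: "involutory_automorphism \<sigma>" and B: "hermitian_form scale \<sigma> B"
    and x: "B x x = 0" and xy: "B x y \<noteq> 0"
  shows "\<exists>c. B (y + scale c x) (y + scale c x) = 0"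
proof -
  have add_left: "B (u + v) w = B u w + B v w" and add_right: "B u (v + w) = B u v + B u w"
    and scale_left: "B (scale c u) v = c * B u v" and scale_right: "B u (scale c v) = \<sigma> c * B u v"
    and herm: "B v u = \<sigma> (B u v)" for u v w c
    using B unfolding hermitian_form_def by blast+
  have \<sigma>_add: "\<sigma> (a + b) = \<sigma> a + \<sigma> b" and \<sigma>_mult: "\<sigma> (a * b) = \<sigma> a * \<sigma> b"
    and \<sigma>_\<sigma>: "\<sigma> (\<sigma> a) = a" for a b
    using \<sigma> unfolding involutory_automorphism_def by auto
  note \<sigma>_basics = involutory_automorphism_basics[OF \<sigma>]
  obtain t where t: "t + \<sigma> t \<noteq> 0" using involutory_automorphism_trace_nonzero[OF \<sigma>] by blast
  \<comment> \<open>\<open>B y y\<close> and the trace \<open>t + \<sigma> t\<close> are fixed by \<open>\<sigma>\<close>, so \<open>l\<close> below is too, and \<open>c\<close> solves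
    \<open>B y y + \<sigma> (c * B x y) + c * B x y = 0\<close>\<close>
  define s where "s = t + \<sigma> t"
  define l where "l = - B y y / s"
  define c where "c = l * t / B x y"
  have "\<sigma> (B y y) = B y y" using herm[of y y] by simp
  moreover have "\<sigma> s = s" unfolding s_def using \<sigma>_add \<sigma>_\<sigma> by (simp add: add.commute)
  ultimately have \<sigma>_l: "\<sigma> l = l"
    unfolding l_def by (simp add: divide_inverse \<sigma>_mult \<sigma>_basics(4,5))
  have c: "c * B x y = l * t" unfolding c_def using xy by simp
  have "B (y + scale c x) (y + scale c x) = B y y + \<sigma> c * B y x + c * B x y + c * (\<sigma> c * B x x)"
    by (simp add: add_left add_right scale_left scale_right algebra_simps)
  also have "\<dots> = B y y + \<sigma> (c * B x y) + c * B x y"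
  proof -
    have "B y x = \<sigma> (B x y)" using herm[of x y] herm[of y x] \<sigma>_\<sigma> by metis
    then show ?thesis using x by (simp add: \<sigma>_mult)
  qed
  also have "\<dots> = B y y + l * s" unfolding c s_def using \<sigma>_mult \<sigma>_l by (simp add: algebra_simps)
  also have "\<dots> = 0" unfolding l_def using t s_def by simp
  finally show ?thesis by blast
qed

lemma symplectic_polar_grassmann:
  assumes W: "formed_space Symplectic scale B Q \<omega>" and k: "1 \<le> k" "k < \<omega>"
  shows "polar_grassmann scale B id (\<lambda>_. True) Symplectic Q \<omega> k"
proof -
  have vs: "vector_space scale" and fd: "fin_dim scale" and bf: "bilinear_form scale B"
    and alt: "\<forall>v. B v v = 0" and nd: "nondegenerate_form B"
    and ex: "\<exists>U. singular Symplectic scale B Q U \<and> vector_space.dim scale U = \<omega>"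
    and mx: "\<forall>U. singular Symplectic scale B Q U \<longrightarrow> vector_space.dim scale U \<le> \<omega>"
    using W unfolding formed_space_def by auto
  interpret vector_space scale by (rule vs)
  have add1: "B (u + v) w = B u w + B v w" and add2: "B u (v + w) = B u v + B u w"
    and sc1: "B (scale c u) v = c * B u v" and sc2: "B u (scale c v) = c * B u v" for u v w c
    using bf unfolding bilinear_form_def by auto
  have anti: "B u v + B v u = 0" for u v
  proof -
    have "0 = B (u + v) (u + v)" using alt by simp
    also have "\<dots> = B u u + B u v + (B v u + B v v)" by (simp add: add1 add2)
    finally show ?thesis using alt by simp
  qed
  show ?thesis
  proof unfold_locales
    show "\<exists>S. finite S \<and> span S = UNIV" using fd unfolding fin_dim_def by simp
    show "B (u + v) w = B u w + B v w" "B u (v + w) = B u v + B u w"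
      "B (scale c u) v = c * B u v" "B u (scale c v) = id c * B u v" for u v w c
      by (simp_all add: add1 add2 sc1 sc2)
    show "(B u v = 0) = (B v u = 0)" for u v using anti[of u v] by (auto simp: add_eq_0_iff)
    show "B u u = 0" for u using alt by simp
    show "v = 0" if "\<forall>u. B u v = 0" for v using nd that unfolding nondegenerate_form_def by auto
    show "singular Symplectic scale B Q U = (subspace U \<and> (\<forall>u\<in>U. True) \<and> (\<forall>u\<in>U. \<forall>v\<in>U. B u v = 0))"
      for U unfolding singular_def by simp
  qed (use ex mx k in auto)
qed

lemma orthogonal_polar_grassmann:
  assumes W: "formed_space Orthogonal scale B Q \<omega>" and k: "1 \<le> k" "k < \<omega>"
  shows "polar_grassmann scale B id (\<lambda>v. Q v = 0) Orthogonal Q \<omega> k"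
proof -
  have vs: "vector_space scale" and fd: "fin_dim scale" and qf: "quadratic_form scale Q B"
    and nd: "nondegenerate_quadratic Q B"
    and ex: "\<exists>U. singular Orthogonal scale B Q U \<and> vector_space.dim scale U = \<omega>"
    and mx: "\<forall>U. singular Orthogonal scale B Q U \<longrightarrow> vector_space.dim scale U \<le> \<omega>"
    using W unfolding formed_space_def by auto
  interpret vector_space scale by (rule vs)
  have Q_scale: "Q (scale c v) = c ^ 2 * Q v" and Q_add: "Q (u + v) = B u v + Q u + Q v" for c u v
    using qf unfolding quadratic_form_def by auto
  have add1: "B (u + v) w = B u w + B v w" and add2: "B u (v + w) = B u v + B u w"
    and sc1: "B (scale c u) v = c * B u v" and sc2: "B u (scale c v) = c * B u v" for u v w c
    using qf unfolding quadratic_form_def bilinear_form_def by auto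
  have sym: "B u v = B v u" for u v using Q_add[of u v] Q_add[of v u] by (simp add: add.commute)
  show ?thesis
  proof unfold_locales
    show "\<exists>S. finite S \<and> span S = UNIV" using fd unfolding fin_dim_def by simp
    show "B (u + v) w = B u w + B v w" "B u (v + w) = B u v + B u w"
      "B (scale c u) v = c * B u v" "B u (scale c v) = id c * B u v" for u v w c
      by (simp_all add: add1 add2 sc1 sc2)
    show "(B u v = 0) = (B v u = 0)" for u v using sym[of u v] by simp
    show "Q (u + v) = 0" if "Q u = 0" "Q v = 0" "B u v = 0" for u v using that Q_add by simp
    show "Q (scale c u) = 0" if "Q u = 0" for u c using that Q_scale by simp
    show "B u u = 0" if "Q u = 0" for u
    proof -
      have "u + u = scale 2 u" by (metis one_add_one scale_left_distrib scale_one)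
      then show ?thesis using Q_scale[of 2 u] Q_add[of u u] that by simp
    qed
    show "v = 0" if "\<forall>u. B u v = 0" "Q v = 0" for v
      using nd that unfolding nondegenerate_quadratic_def by auto
    show "\<exists>c. Q (y + scale c x) = 0" if "Q x = 0" "B x y \<noteq> 0" for x y
    proof
      define c where "c = - Q y / B y x"
      have "B y (scale c x) = c * B y x" by (rule sc2)
      also have "\<dots> = - Q y" using that sym unfolding c_def by simp
      finally have "B y (scale c x) = - Q y" .
      moreover have "Q (scale c x) = 0" using Q_scale that by simp
      ultimately show "Q (y + scale c x) = 0" using Q_add by simp
    qed
    show "singular Orthogonal scale B Q U = (subspace U \<and> (\<forall>u\<in>U. Q u = 0) \<and> (\<forall>u\<in>U. \<forall>v\<in>U. B u v = 0))"
      for U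
    proof -
      have "B u v = 0" if "subspace U" "\<forall>u\<in>U. Q u = 0" "u \<in> U" "v \<in> U" for u v
        using that Q_add[of u v] subspace_add[OF that(1,3,4)] by simp
      then show ?thesis unfolding singular_def by auto
    qed
  qed (use ex mx k in auto)
qed

lemma unitary_polar_grassmann:
  assumes W: "formed_space Unitary scale B Q \<omega>" and k: "1 \<le> k" "k < \<omega>"
  shows "\<exists>\<sigma>. polar_grassmann scale B \<sigma> (\<lambda>v. B v v = 0) Unitary Q \<omega> k"
proof -
  have vs: "vector_space scale" and fd: "fin_dim scale" and nd: "nondegenerate_form B"
    and ex: "\<exists>U. singular Unitary scale B Q U \<and> vector_space.dim scale U = \<omega>"
    and mx: "\<forall>U. singular Unitary scale B Q U \<longrightarrow> vector_space.dim scale U \<le> \<omega>"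
    using W unfolding formed_space_def by auto
  obtain \<sigma> where \<sigma>: "involutory_automorphism \<sigma>" and herm: "hermitian_form scale \<sigma> B"
    using W unfolding formed_space_def by auto
  interpret vector_space scale by (rule vs)
  have add1: "B (u + v) w = B u w + B v w" and add2: "B u (v + w) = B u v + B u w"
    and sc1: "B (scale c u) v = c * B u v" and sc2: "B u (scale c v) = \<sigma> c * B u v"
    and hs: "B v u = \<sigma> (B u v)" for u v w c
    using herm unfolding hermitian_form_def by blast+
  note \<sigma>_basics = involutory_automorphism_basics[OF \<sigma>]
  have "polar_grassmann scale B \<sigma> (\<lambda>v. B v v = 0) Unitary Q \<omega> k"
  proof unfold_locales
    show "\<exists>S. finite S \<and> span S = UNIV" using fd unfolding fin_dim_def by simp
    show "B (u + v) w = B u w + B v w" "B u (v + w) = B u v + B u w"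
      "B (scale c u) v = c * B u v" "B u (scale c v) = \<sigma> c * B u v" for u v w c
      by (simp_all add: add1 add2 sc1 sc2)
    show "\<sigma> (a + b) = \<sigma> a + \<sigma> b" "\<sigma> (\<sigma> a) = a" for a b
      using \<sigma> unfolding involutory_automorphism_def by auto
    show "(B u v = 0) = (B v u = 0)" for u v using hs[of u v] \<sigma>_basics(2) by simp
    show "B (u + v) (u + v) = 0" if "B u u = 0" "B v v = 0" "B u v = 0" for u v
      using that hs[of v u] \<sigma>_basics(1) by (simp add: add1 add2)
    show "B (scale c u) (scale c u) = 0" if "B u u = 0" for u c using that by (simp add: sc1 sc2)
    show "v = 0" if "\<forall>u. B u v = 0" "B v v = 0" for v using nd that unfolding nondegenerate_form_def by auto
    show "\<exists>c. B (y + scale c x) (y + scale c x) = 0" if "B x x = 0" "B x y \<noteq> 0" for x y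
      by (rule hermitian_isotropic_shift[OF \<sigma> herm that])
    show "singular Unitary scale B Q U = (subspace U \<and> (\<forall>u\<in>U. B u u = 0) \<and> (\<forall>u\<in>U. \<forall>v\<in>U. B u v = 0))"
      for U unfolding singular_def by auto
  qed (use ex mx k in auto)
  then show ?thesis by blast
qed

lemma formed_space_polar_grassmann:
  assumes "formed_space t scale B Q \<omega>" "1 \<le> k" "k < \<omega>"
  shows "\<exists>\<sigma> singular_vec. polar_grassmann scale B \<sigma> singular_vec t Q \<omega> k"
  using assms symplectic_polar_grassmann orthogonal_polar_grassmann unitary_polar_grassmann
  by (cases t) blast+

theorem proposition4p3:
  fixes t :: form_kind
    and scale :: "'a::{field,finite} \<Rightarrow> 'v::ab_group_add \<Rightarrow> 'v"
    and B :: "'v \<Rightarrow> 'v \<Rightarrow> 'a" and Q :: "'v \<Rightarrow> 'a"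
    and \<omega> k :: nat and X Y :: "'v set"
  assumes W: "formed_space t scale B Q \<omega>"
    and \<omega>: "\<omega> \<ge> 2"
    and k: "1 \<le> k" "k < \<omega>"
    and X: "pg_vertex t scale B Q k X" and Y: "pg_vertex t scale B Q k Y"
    and XY: "X \<noteq> Y"
  defines "m \<equiv> k - vector_space.dim scale (X \<inter> Y)"
  shows
   "(\<not> opposite B X Y \<longrightarrow>
       pg_dist t scale B Q k X Y = m \<and>
       (\<forall>P. pg_geodesic t scale B Q k P X Y \<longrightarrow>
          (\<exists>w x y :: nat \<Rightarrow> 'v.
             inj_on w {1..k - m} \<and> \<not> module.dependent scale (w ` {1..k - m}) \<and>
             module.span scale (w ` {1..k - m}) = X \<inter> Y \<and>
             X = module.span scale (x ` {1..m} \<union> w ` {1..k - m}) \<and>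
             Y = module.span scale (y ` {1..m} \<union> w ` {1..k - m}) \<and>
             (\<forall>i\<le>m. P ! i = module.span scale
                  (x ` {1..m - i} \<union> y ` {m - i + 1..m} \<union> w ` {1..k - m})) \<and>
             (\<forall>i j. 1 \<le> i \<and> i \<le> j \<and> j \<le> m \<longrightarrow> B (x i) (y j) = 0) \<and>
             (\<forall>i\<in>{2..m}. (\<forall>j\<in>{1..<i}. B (x i) (y j) = 0) \<or>
                (\<exists>!i'. i' \<in> {1..<i} \<and> B (x i) (y i') = 1 \<and>
                   (\<forall>j\<in>{1..<i}. j \<noteq> i' \<longrightarrow> B (x i) (y j) = 0))) \<and>
             (\<forall>i1 i2 i1' i2'. i1 \<in> {2..m} \<and> i2 \<in> {2..m} \<and> i1 \<noteq> i2 \<and>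
                i1' \<in> {1..<i1} \<and> B (x i1) (y i1') = 1 \<and>
                (\<forall>j\<in>{1..<i1}. j \<noteq> i1' \<longrightarrow> B (x i1) (y j) = 0) \<and>
                i2' \<in> {1..<i2} \<and> B (x i2) (y i2') = 1 \<and>
                (\<forall>j\<in>{1..<i2}. j \<noteq> i2' \<longrightarrow> B (x i2) (y j) = 0) \<longrightarrow> i1' \<noteq> i2'))))
    \<and>
    (opposite B X Y \<longrightarrow>
       pg_dist t scale B Q k X Y = m + 1 \<and>
       (\<forall>P. pg_geodesic t scale B Q k P X Y \<longrightarrow>
          (\<exists>w x y :: nat \<Rightarrow> 'v.
             inj_on w {1..k - m} \<and> \<not> module.dependent scale (w ` {1..k - m}) \<and>
             module.span scale (w ` {1..k - m}) = X \<inter> Y \<and>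
             X = module.span scale (x ` {1..m} \<union> w ` {1..k - m}) \<and>
             Y = module.span scale (y ` {1..m} \<union> w ` {1..k - m}) \<and>
             P ! 0 = X \<and>
             (\<forall>i\<le>m. P ! Suc i = module.span scale
                  (x ` {0..<m - i} \<union> y ` {m - i + 1..m} \<union> w ` {1..k - m})) \<and>
             (\<forall>i j. i < j \<and> j \<le> m \<longrightarrow> B (x i) (y j) = 0) \<and>
             (\<forall>i\<in>{1..m}. B (x i) (y i) = 1) \<and>
             (\<forall>i j. 1 \<le> j \<and> j < i \<and> i \<le> m \<longrightarrow> B (x i) (y j) = 0))))
    \<and>
    ((\<forall>U U'. pg_vertex t scale B Q k U \<and> pg_vertex t scale B Q k U' \<longrightarrow>
        (\<exists>P. pg_walk t scale B Q k P U U') \<and> pg_dist t scale B Q k U U' \<le> k + 1) \<and>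
     (\<exists>U U'. pg_vertex t scale B Q k U \<and> pg_vertex t scale B Q k U' \<and>
        pg_dist t scale B Q k U U' = k + 1))"
proof -
  obtain \<sigma> singular_vec where "polar_grassmann scale B \<sigma> singular_vec t Q \<omega> k"
    using formed_space_polar_grassmann[OF W k] by blast
  then interpret polar_grassmann scale B \<sigma> singular_vec t Q \<omega> k .
  have m: "m = k - dim (X \<inter> Y)" by (simp add: m_def)
  show ?thesis
  proof (intro conjI impI allI)
    show "gdist X Y = m" if "\<not> opposite B X Y" using gdist_not_opposite[OF X Y XY that] m by simp
    show "gdist X Y = m + 1" if "opposite B X Y" using gdist_opposite[OF X Y that] m by simp
    show "\<exists>P. walk P U U'" "gdist U U' \<le> k + 1" if "vert U \<and> vert U'" for U U'
      using gdist_le_Suc_k that by auto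
    show "\<exists>U U'. vert U \<and> vert U' \<and> gdist U U' = k + 1" by (rule exists_gdist_Suc_k)
  qed ((rule geodesic_structure_not_opposite[OF X Y XY _ _ m] | rule geodesic_structure_opposite[OF X Y _ _ m]);
      assumption)+
qed

end
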